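(* Let $G$ be a locally compact, unimodular, metrizable group, let $d$ be a left-invariant proper metric on $G$ inducing its topology, and let $\Gamma<G$ be a discrete cocompact subgroup. Let $F$ be a finitely generated free group with a symmetric free generating set $S$, and let $\phi:F\to G$ be a homomorphism. Then for every $\epsilon>0$ there exists an $\epsilon$-perturbation $\phi_\epsilon:F\to G$ of $\phi$ that is virtually a homomorphism into $\Gamma$.
   Context: A symmetric free generating set of a free group $F$ is a set $S=B\cup B^{-1}$ where $B$ is a free basis of $F$. Given a group $F$ with finite symmetric generating set $S$, a homomorphism $\phi:F\to G$ and $\epsilon>0$, a map $\phi_\epsilon:F\to G$ (not necessarily a homomorphism, and not required to send the identity to the identity) is an $\epsilon$-perturbation of $\phi$ if $d(\phi_\epsilon(fs),\phi_\epsilon(f)\phi(s))\le\epsilon$ for all $f\in F$, $s\in S$. A map $\phi_\epsilon:F\to G$ is virtually a homomorphism into $\Gamma$ if there is a finite-index subgroup $F'<F$ such that $\phi_\epsilon(f_1f_2)=\phi_\epsilon(f_1)\phi_\epsilon(f_2)$ for all $f_1\in F'$, $f_2\in F$, and moreover $\phi_\epsilon(F')\subset\Gamma$. *)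

theory Defs
  imports "HOL-Analysis.Analysis"
begin

(* Groups are written additively via the (not necessarily commutative) class group_add. *)

definition is_subgroup :: "'a::group_add set \<Rightarrow> bool" where
  "is_subgroup H \<longleftrightarrow> 0 \<in> H \<and> (\<forall>x\<in>H. \<forall>y\<in>H. x + y \<in> H) \<and> (\<forall>x\<in>H. - x \<in> H)"

definition finite_index :: "'a::group_add set \<Rightarrow> bool" where
  "finite_index H \<longleftrightarrow> finite {(\<lambda>x. g + x) ` H | g. True}"

definition is_hom :: "('a::group_add \<Rightarrow> 'b::group_add) \<Rightarrow> bool" where
  "is_hom f \<longleftrightarrow> (\<forall>x y. f (x + y) = f x + f y)"

definition letter_val :: "'a::group_add \<times> bool \<Rightarrow> 'a" where
  "letter_val l = (if snd l then fst l else - fst l)"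

definition word_val :: "('a::group_add \<times> bool) list \<Rightarrow> 'a" where
  "word_val w = foldr (\<lambda>l acc. letter_val l + acc) w 0"

definition reduced_word :: "('a \<times> bool) list \<Rightarrow> bool" where
  "reduced_word w \<longleftrightarrow> (\<forall>i. Suc i < length w \<longrightarrow>
      \<not> (fst (w ! i) = fst (w ! Suc i) \<and> snd (w ! i) \<noteq> snd (w ! Suc i)))"

definition free_basis :: "'a::group_add set \<Rightarrow> bool" where
  "free_basis B \<longleftrightarrow>
     (\<forall>g. \<exists>w. set (map fst w) \<subseteq> B \<and> word_val w = g) \<and>
     (\<forall>w. set (map fst w) \<subseteq> B \<and> reduced_word w \<and> w \<noteq> [] \<longrightarrow> word_val w \<noteq> 0)"

definition symmetric_free_generating_set :: "'a::group_add set \<Rightarrow> bool" where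
  "symmetric_free_generating_set S \<longleftrightarrow>
     (\<exists>B. finite B \<and> free_basis B \<and> S = B \<union> uminus ` B)"

(* unimodular: there is a nonzero, locally finite Borel measure that is both left and right invariant
   (i.e. a left Haar measure that is also right invariant) *)
definition unimodular :: "'a::{group_add, topological_space} itself \<Rightarrow> bool" where
  "unimodular _ \<longleftrightarrow> (\<exists>M :: 'a measure.
      sets M = sets borel \<and> emeasure M UNIV \<noteq> 0 \<and>
      (\<forall>K. compact K \<longrightarrow> emeasure M K < \<infinity>) \<and>
      (\<forall>g A. A \<in> sets borel \<longrightarrow>
          emeasure M ((\<lambda>x. g + x) ` A) = emeasure M A \<and>
          emeasure M ((\<lambda>x. x + g) ` A) = emeasure M A))"

definition perturbation :: "real \<Rightarrow> 'f::group_add set \<Rightarrow> ('f \<Rightarrow> 'g::{group_add,metric_space}) \<Rightarrow> ('f \<Rightarrow> 'g) \<Rightarrow> bool" where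
  "perturbation \<epsilon> S \<phi> \<psi> \<longleftrightarrow> (\<forall>f. \<forall>s\<in>S. dist (\<psi> (f + s)) (\<psi> f + \<phi> s) \<le> \<epsilon>)"

definition virtually_hom_into :: "('f::group_add \<Rightarrow> 'g::group_add) \<Rightarrow> 'g set \<Rightarrow> bool" where
  "virtually_hom_into \<psi> \<Gamma> \<longleftrightarrow> (\<exists>F'. is_subgroup F' \<and> finite_index F' \<and>
      (\<forall>f1\<in>F'. \<forall>f2. \<psi> (f1 + f2) = \<psi> f1 + \<psi> f2) \<and> \<psi> ` F' \<subseteq> \<Gamma>)"

end

theory Submission
  imports Defs
begin

text \<open>
  The idea: cut a fundamental domain of \<open>\<Gamma>\<close> into finitely many small Borel pieces \<open>D p\<close>, with
  \<open>D 0\<close> an open neighbourhood of \<open>0\<close>.  For a free generator \<open>b\<close>, right translation by \<open>\<phi> b\<close>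
  carries part of piece \<open>p\<close> into the \<open>\<Gamma>\<close>-orbit of piece \<open>q\<close>; by unimodularity of the Haar
  measure the resulting matrix of masses has row and column sums equal to the masses of the
  pieces.  A rational approximation with the same support, scaled to integers, is realised by a
  permutation \<open>\<sigma> b\<close> of finitely many sites (\<open>n p\<close> sites over piece \<open>p\<close>).  Placing each site at a
  point of its piece gives a finite model: positions \<open>pos s\<close>, permutations \<open>\<sigma> b\<close> and lattice
  elements \<open>\<gamma> b s\<close> with \<open>pos s + \<phi> b \<approx> \<gamma> b s + pos (\<sigma> b s)\<close>.  The generators then act on
  \<open>G \<times> sites\<close> by the skew products \<open>(y, s) \<mapsto> (y + \<gamma> b s, \<sigma> b s)\<close>; by freeness this is an
  action of \<open>F\<close>, and reading off the \<open>\<Gamma>\<close>-coordinate plus the position of the site reached from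
  the base site gives the perturbation \<open>\<psi>\<close>.  On the stabiliser of the base site, a subgroup of
  finite index, \<open>\<psi>\<close> is a homomorphism into \<open>\<Gamma>\<close>.
\<close>

section \<open>Words and the universal property of free bases\<close>

lemma word_val_Nil [simp]: "word_val [] = 0"
  by (simp add: word_val_def)

lemma word_val_Cons [simp]: "word_val (l # w) = letter_val l + word_val w"
  by (simp add: word_val_def)

lemma word_val_append: "word_val (w1 @ w2) = word_val w1 + word_val w2"
  by (induction w1) (simp_all add: add.assoc)

definition cancels :: "'a \<times> bool \<Rightarrow> 'a \<times> bool \<Rightarrow> bool" where
  "cancels l l' \<longleftrightarrow> fst l = fst l' \<and> snd l \<noteq> snd l'"

lemma reduced_word_Cons_Cons:
  "reduced_word (x # y # w) \<longleftrightarrow> \<not> cancels x y \<and> reduced_word (y # w)"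
proof
  assume red: "reduced_word (x # y # w)"
  show "\<not> cancels x y \<and> reduced_word (y # w)"
    using red[unfolded reduced_word_def, rule_format, of 0] red[unfolded reduced_word_def, rule_format, of "Suc _"]
    by (auto simp: cancels_def reduced_word_def)
next
  assume "\<not> cancels x y \<and> reduced_word (y # w)"
  then show "reduced_word (x # y # w)"
    unfolding reduced_word_def by (auto simp: cancels_def nth_Cons split: nat.split)
qed

lemma reduced_word_single: "reduced_word [x]"
  by (simp add: reduced_word_def)

lemma reduced_word_Cons: "reduced_word (x # w) \<Longrightarrow> reduced_word w"
  by (cases w) (auto simp: reduced_word_Cons_Cons reduced_word_def)

fun reduce :: "('a \<times> bool) list \<Rightarrow> ('a \<times> bool) list" where
  "reduce [] = []"
| "reduce (l # w) = (case reduce w of [] \<Rightarrow> [l] | l' # r \<Rightarrow> if cancels l l' then r else l # l' # r)"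

lemma reduced_reduce: "reduced_word (reduce w)"
proof (induction w)
  case (Cons l w)
  then show ?case
    by (cases "reduce w") (auto simp: reduced_word_Cons_Cons reduced_word_single intro: reduced_word_Cons)
qed (simp add: reduced_word_def)

lemma set_reduce: "set (reduce w) \<subseteq> set w"
  by (induction w) (auto split: list.split)

lemma word_val_reduce:
  "word_val (map (apfst h) (reduce w)) = (word_val (map (apfst h) w) :: 'b::group_add)"
proof (induction w)
  case Nil
  then show ?case by simp
next
  case (Cons l w)
  show ?case
  proof (cases "reduce w")
    case (Cons l' r)
    have IH: "word_val (map (apfst h) w) = letter_val (apfst h l') + word_val (map (apfst h) r)"
      using Cons.IH Cons by simp
    show ?thesis
    proof (cases "cancels l l'")
      case True
      then have "letter_val (apfst h l) + letter_val (apfst h l') = (0::'b)"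
        by (simp add: cancels_def letter_val_def)
      then show ?thesis
        using Cons True IH by (simp add: add.assoc[symmetric])
    qed (use Cons IH in simp)
  qed (use Cons.IH in simp)
qed

definition inv_word :: "('a \<times> bool) list \<Rightarrow> ('a \<times> bool) list" where
  "inv_word w = rev (map (\<lambda>l. (fst l, \<not> snd l)) w)"

lemma word_val_inv_word:
  "word_val (map (apfst h) (inv_word w)) = - (word_val (map (apfst h) w) :: 'b::group_add)"
  by (induction w) (simp_all add: inv_word_def word_val_append letter_val_def minus_add)

lemma free_basis_word_val_eq:
  fixes w1 w2 :: "('a::group_add \<times> bool) list"
  assumes fb: "free_basis B" and "set (map fst w1) \<subseteq> B" "set (map fst w2) \<subseteq> B"
    and eq: "word_val w1 = word_val w2"
  shows "word_val (map (apfst h) w1) = (word_val (map (apfst h) w2) :: 'b::group_add)"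
proof -
  define w where "w = w1 @ inv_word w2"
  have "word_val w = 0"
    using eq word_val_inv_word[of "\<lambda>x. x" w2] by (simp add: w_def word_val_append apfst_def map_prod_def)
  then have "word_val (reduce w) = 0"
    using word_val_reduce[of "\<lambda>x. x" w] by (simp add: apfst_def map_prod_def)
  moreover have "set (map fst (reduce w)) \<subseteq> B"
    using set_reduce[of w] assms(2,3) by (fastforce simp: w_def inv_word_def)
  ultimately have "reduce w = []"
    using fb reduced_reduce[of w] unfolding free_basis_def by blast
  then have "word_val (map (apfst h) w1) + - word_val (map (apfst h) w2) = 0"
    using word_val_reduce[of h w] by (simp add: w_def word_val_append word_val_inv_word)
  then show ?thesis
    by (simp add: add_eq_0_iff2)
qed

definition free_ext :: "'a set \<Rightarrow> ('a::group_add \<Rightarrow> 'b::group_add) \<Rightarrow> 'a \<Rightarrow> 'b" where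
  "free_ext B h g = word_val (map (apfst h) (SOME w. set (map fst w) \<subseteq> B \<and> word_val w = g))"

lemma free_ext_word:
  assumes "free_basis B"
  obtains w where "set (map fst w) \<subseteq> B" "word_val w = g"
    "free_ext B h g = word_val (map (apfst h) w)"
proof -
  have "\<exists>w. set (map fst w) \<subseteq> B \<and> word_val w = g"
    using assms unfolding free_basis_def by blast
  then have "set (map fst (SOME w. set (map fst w) \<subseteq> B \<and> word_val w = g)) \<subseteq> B \<and>
      word_val (SOME w. set (map fst w) \<subseteq> B \<and> word_val w = g) = g"
    by (rule someI_ex)
  then show ?thesis
    using that unfolding free_ext_def by blast
qed

lemma free_ext_add:
  assumes "free_basis B"
  shows "free_ext B h (x + y) = free_ext B h x + free_ext B h y"
proof -
  obtain u where u: "set (map fst u) \<subseteq> B" "word_val u = x" "free_ext B h x = word_val (map (apfst h) u)"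
    using free_ext_word[OF assms] .
  obtain v where v: "set (map fst v) \<subseteq> B" "word_val v = y" "free_ext B h y = word_val (map (apfst h) v)"
    using free_ext_word[OF assms] .
  obtain w where w: "set (map fst w) \<subseteq> B" "word_val w = x + y"
    "free_ext B h (x + y) = word_val (map (apfst h) w)"
    using free_ext_word[OF assms] .
  have "word_val (map (apfst h) w) = (word_val (map (apfst h) (u @ v)) :: 'b)"
    by (rule free_basis_word_val_eq[OF assms]) (use u v w in \<open>auto simp: word_val_append\<close>)
  then show ?thesis
    using u v w by (simp add: word_val_append)
qed

lemma free_ext_basis:
  assumes "free_basis B" and "b \<in> B"
  shows "free_ext B h b = h b"
proof -
  obtain w where w: "set (map fst w) \<subseteq> B" "word_val w = b" "free_ext B h b = word_val (map (apfst h) w)"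
    using free_ext_word[OF assms(1)] .
  have "word_val (map (apfst h) w) = (word_val (map (apfst h) [(b, True)]) :: 'b)"
    by (rule free_basis_word_val_eq[OF assms(1)]) (use w assms(2) in \<open>auto simp: letter_val_def\<close>)
  then show ?thesis
    using w by (simp add: letter_val_def)
qed

lemma free_ext_in_subgroup:
  assumes "free_basis B" "is_subgroup H" "\<And>b. b \<in> B \<Longrightarrow> h b \<in> H"
  shows "free_ext B h g \<in> H"
proof -
  obtain w where w: "set (map fst w) \<subseteq> B" "free_ext B h g = word_val (map (apfst h) w)"
    using free_ext_word[OF assms(1)] by metis
  have "word_val (map (apfst h) w) \<in> H"
    using w(1)
  proof (induction w)
    case (Cons l w)
    then have "letter_val (apfst h l) \<in> H"
      using assms(2,3) by (auto simp: letter_val_def is_subgroup_def)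
    with Cons show ?case
      using assms(2) by (simp add: is_subgroup_def)
  qed (use assms(2) in \<open>simp add: is_subgroup_def\<close>)
  then show ?thesis
    using w(2) by simp
qed

section \<open>Bijections, skew products and finite models\<close>

text \<open>The group of all bijections of a type; \<open>f + g\<close> applies \<open>f\<close> first, then \<open>g\<close>, so that
  the group acts on the right.\<close>
typedef 'a bijection = "{f :: 'a \<Rightarrow> 'a. bij f}"
  by (rule exI[of _ id]) simp

lemma bij_Rep_bijection: "bij (Rep_bijection f)"
  using Rep_bijection[of f] by simp

instantiation bijection :: (type) group_add
begin

definition "0 = Abs_bijection id"
definition "f + g = Abs_bijection (Rep_bijection g \<circ> Rep_bijection f)"
definition "- f = Abs_bijection (inv (Rep_bijection f))"
definition "f - g = f + - (g :: 'a bijection)"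

lemma Rep_bijection_0: "Rep_bijection 0 = id"
  by (simp add: zero_bijection_def Abs_bijection_inverse)

lemma Rep_bijection_add: "Rep_bijection (f + g) = Rep_bijection g \<circ> Rep_bijection f"
  by (simp add: plus_bijection_def Abs_bijection_inverse bij_comp bij_Rep_bijection)

lemma Rep_bijection_uminus: "Rep_bijection (- f) = inv (Rep_bijection f)"
  by (simp add: uminus_bijection_def Abs_bijection_inverse bij_imp_bij_inv bij_Rep_bijection)

instance
proof
  fix a b c :: "'a bijection"
  show "a + b + c = a + (b + c)"
    by (simp add: Rep_bijection_inject[symmetric] Rep_bijection_add comp_assoc)
  show "0 + a = a" "a + 0 = a"
    by (simp_all add: Rep_bijection_inject[symmetric] Rep_bijection_add Rep_bijection_0)
  show "- a + a = 0"
    using bij_is_surj[OF bij_Rep_bijection[of a]]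
    by (simp add: Rep_bijection_inject[symmetric] Rep_bijection_add Rep_bijection_0
        Rep_bijection_uminus surj_iff)
  show "a + - b = a - b"
    by (simp add: minus_bijection_def)
qed

end

definition skew :: "('s \<Rightarrow> 'g::group_add) \<Rightarrow> ('s \<Rightarrow> 's) \<Rightarrow> 'g \<times> 's \<Rightarrow> 'g \<times> 's" where
  "skew c \<pi> = (\<lambda>(y, s). (y + c s, \<pi> s))"

lemma skew_apply [simp]: "skew c \<pi> (y, s) = (y + c s, \<pi> s)"
  by (simp add: skew_def)

lemma skew_comp: "skew c' \<pi>' \<circ> skew c \<pi> = skew (\<lambda>s. c s + c' (\<pi> s)) (\<pi>' \<circ> \<pi>)"
  by (auto simp: skew_def fun_eq_iff add.assoc)

lemma skew_inv_comp:
  assumes "bij \<pi>"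
  shows "skew (\<lambda>s. - c (inv \<pi> s)) (inv \<pi>) \<circ> skew c \<pi> = id"
    and "skew c \<pi> \<circ> skew (\<lambda>s. - c (inv \<pi> s)) (inv \<pi>) = id"
  using assms by (auto simp: skew_def fun_eq_iff bij_is_inj bij_is_surj surj_f_inv_f)

lemma bij_skew: "bij \<pi> \<Longrightarrow> bij (skew c \<pi>)"
  using o_bij skew_inv_comp by metis

lemma inv_skew: "bij \<pi> \<Longrightarrow> inv (skew c \<pi>) = skew (\<lambda>s. - c (inv \<pi> s)) (inv \<pi>)"
  using inv_unique_comp skew_inv_comp by metis

definition skew_bij :: "('s \<Rightarrow> 'g::group_add) \<Rightarrow> ('s \<Rightarrow> 's) \<Rightarrow> ('g \<times> 's) bijection" where
  "skew_bij c \<pi> = Abs_bijection (skew c \<pi>)"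

lemma Rep_skew_bij: "bij \<pi> \<Longrightarrow> Rep_bijection (skew_bij c \<pi>) = skew c \<pi>"
  by (simp add: skew_bij_def Abs_bijection_inverse bij_skew)

lemma skew_bij_0: "skew_bij (\<lambda>_. 0) id = 0"
  by (simp add: skew_bij_def zero_bijection_def skew_def id_def)

lemma skew_bij_add:
  assumes "bij \<pi>" "bij \<pi>'"
  shows "skew_bij c \<pi> + skew_bij c' \<pi>' = skew_bij (\<lambda>s. c s + c' (\<pi> s)) (\<pi>' \<circ> \<pi>)"
  unfolding plus_bijection_def Rep_skew_bij[OF assms(1)] Rep_skew_bij[OF assms(2)] skew_comp
  by (simp add: skew_bij_def)

lemma skew_bij_uminus:
  assumes "bij \<pi>"
  shows "- skew_bij c \<pi> = skew_bij (\<lambda>s. - c (inv \<pi> s)) (inv \<pi>)"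
  unfolding uminus_bijection_def Rep_skew_bij[OF assms] inv_skew[OF assms]
  by (simp add: skew_bij_def)

definition skew_group :: "'g::group_add set \<Rightarrow> 's set \<Rightarrow> ('g \<times> 's) bijection set" where
  "skew_group \<Gamma> S = {skew_bij c \<pi> | c \<pi>. range c \<subseteq> \<Gamma> \<and> \<pi> permutes S}"

lemma skew_group_subgroup:
  assumes "is_subgroup \<Gamma>"
  shows "is_subgroup (skew_group \<Gamma> S)"
  unfolding is_subgroup_def
proof (intro conjI ballI)
  show "0 \<in> skew_group \<Gamma> S"
    using assms permutes_id[of S] unfolding skew_group_def is_subgroup_def
    by (force simp: skew_bij_0[symmetric] id_def)
next
  fix f g assume "f \<in> skew_group \<Gamma> S" "g \<in> skew_group \<Gamma> S"
  then obtain c \<pi> c' \<pi>' where f: "range c \<subseteq> \<Gamma>" "\<pi> permutes S" "f = skew_bij c \<pi>"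
      and g: "range c' \<subseteq> \<Gamma>" "\<pi>' permutes S" "g = skew_bij c' \<pi>'"
    unfolding skew_group_def by blast
  have "range (\<lambda>s. c s + c' (\<pi> s)) \<subseteq> \<Gamma>"
    using assms f(1) g(1) by (auto simp: is_subgroup_def)
  then show "f + g \<in> skew_group \<Gamma> S"
    using f g unfolding skew_group_def by (auto simp: skew_bij_add permutes_bij intro!: permutes_compose)
next
  fix f assume "f \<in> skew_group \<Gamma> S"
  then obtain c \<pi> where f: "range c \<subseteq> \<Gamma>" "\<pi> permutes S" "f = skew_bij c \<pi>"
    unfolding skew_group_def by blast
  have "range (\<lambda>s. - c (inv \<pi> s)) \<subseteq> \<Gamma>"
    using assms f(1) by (auto simp: is_subgroup_def)
  then show "- f \<in> skew_group \<Gamma> S"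
    using f unfolding skew_group_def by (auto simp: skew_bij_uminus permutes_bij intro!: permutes_inv)
qed

definition skew_cocycle :: "('g::group_add \<times> 's) bijection \<Rightarrow> 's \<Rightarrow> 'g" where
  "skew_cocycle h s = fst (Rep_bijection h (0, s))"

definition skew_perm :: "('g::group_add \<times> 's) bijection \<Rightarrow> 's \<Rightarrow> 's" where
  "skew_perm h s = snd (Rep_bijection h (0, s))"

lemma skew_parts_skew_bij:
  assumes "bij \<pi>"
  shows "skew_cocycle (skew_bij c \<pi>) = c" "skew_perm (skew_bij c \<pi>) = \<pi>"
  by (simp_all add: skew_cocycle_def skew_perm_def Rep_skew_bij[OF assms] fun_eq_iff)

lemma skew_group_elem:
  assumes "h \<in> skew_group \<Gamma> S"
  shows "h = skew_bij (skew_cocycle h) (skew_perm h)" "skew_perm h permutes S"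
    "skew_cocycle h s \<in> \<Gamma>"
  using assms by (auto simp: skew_group_def skew_parts_skew_bij permutes_bij)

lemma skew_parts_add:
  assumes "f \<in> skew_group \<Gamma> S" "g \<in> skew_group \<Gamma> S"
  shows "skew_cocycle (f + g) s = skew_cocycle f s + skew_cocycle g (skew_perm f s)"
    and "skew_perm (f + g) = skew_perm g \<circ> skew_perm f"
proof -
  have bij: "bij (skew_perm f)" "bij (skew_perm g)"
    using skew_group_elem(2)[OF assms(1)] skew_group_elem(2)[OF assms(2)] permutes_bij by blast+
  have "f + g = skew_bij (\<lambda>s. skew_cocycle f s + skew_cocycle g (skew_perm f s)) (skew_perm g \<circ> skew_perm f)"
    using skew_bij_add[OF bij, of "skew_cocycle f" "skew_cocycle g"]
    unfolding skew_group_elem(1)[OF assms(1), symmetric] skew_group_elem(1)[OF assms(2), symmetric] .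
  then show "skew_cocycle (f + g) s = skew_cocycle f s + skew_cocycle g (skew_perm f s)"
    and "skew_perm (f + g) = skew_perm g \<circ> skew_perm f"
    using bij by (simp_all add: skew_parts_skew_bij bij_comp)
qed

lemma stabilizer_finite_index:
  fixes act :: "'f::group_add \<Rightarrow> 's \<Rightarrow> 's"
  assumes act_0: "act 0 = id" and act_add: "\<And>x y. act (x + y) = act y \<circ> act x"
    and orbit: "finite (range (\<lambda>f. act f s0))"
  shows "is_subgroup {f. act f s0 = s0}" "finite_index {f. act f s0 = s0}"
proof -
  have cancel: "act (- x) (act x s) = s" "act x (act (- x) s) = s" for x s
    using act_add[of x "- x"] act_add[of "- x" x] act_0 by (simp_all add: fun_eq_iff)
  have "act (- x) s0 = s0" if "act x s0 = s0" for x
    using cancel(1)[of x s0] that by simp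
  then show "is_subgroup {f. act f s0 = s0}"
    by (simp add: is_subgroup_def act_0 act_add)
  have coset: "(\<lambda>x. g + x) ` {f. act f s0 = s0} = {h. act (- h) s0 = act (- g) s0}" for g
  proof (intro set_eqI iffI)
    fix h assume "h \<in> (\<lambda>x. g + x) ` {f. act f s0 = s0}"
    then obtain k where "act k s0 = s0" "h = g + k" by blast
    then show "h \<in> {h. act (- h) s0 = act (- g) s0}"
      using cancel(1)[of k s0] by (simp add: minus_add act_add del: add_uminus_conv_diff)
  next
    fix h assume "h \<in> {h. act (- h) s0 = act (- g) s0}"
    then have "act (- g + h) s0 = s0"
      using cancel(2)[of h s0] by (simp add: act_add)
    moreover have "h = g + (- g + h)"
      by (simp add: add.assoc[symmetric])
    ultimately show "h \<in> (\<lambda>x. g + x) ` {f. act f s0 = s0}"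
      by blast
  qed
  have "{(\<lambda>x. g + x) ` {f. act f s0 = s0} | g. True} \<subseteq> (\<lambda>u. {h. act (- h) s0 = u}) ` range (\<lambda>f. act f s0)"
    unfolding coset by blast
  then show "finite_index {f. act f s0 = s0}"
    unfolding finite_index_def using orbit finite_surj by blast
qed

lemma additive_uminus:
  fixes f :: "'a::group_add \<Rightarrow> 'b::group_add"
  assumes "\<And>x y. f (x + y) = f x + f y"
  shows "f 0 = 0" "f (- x) = - f x"
proof -
  have "f 0 + f 0 = f 0 + 0"
    using assms[of 0 0] by simp
  then show f0: "f 0 = 0"
    by (rule add_left_imp_eq)
  show "f (- x) = - f x"
    using assms[of "- x" x] f0 by (simp add: add_eq_0_iff2)
qed

definition finite_model ::
    "'g::{group_add,metric_space} set \<Rightarrow> ('f \<Rightarrow> 'g) \<Rightarrow> 'f set \<Rightarrow> real \<Rightarrow>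
     's set \<Rightarrow> 's \<Rightarrow> ('s \<Rightarrow> 'g) \<Rightarrow> ('f \<Rightarrow> 's \<Rightarrow> 's) \<Rightarrow> ('f \<Rightarrow> 's \<Rightarrow> 'g) \<Rightarrow> bool" where
  "finite_model \<Gamma> \<phi> B \<epsilon> S s0 pos \<sigma> \<gamma> \<longleftrightarrow> finite S \<and> s0 \<in> S \<and> pos s0 = 0 \<and>
     (\<forall>b\<in>B. \<sigma> b permutes S \<and> range (\<gamma> b) \<subseteq> \<Gamma> \<and>
        (\<forall>s\<in>S. dist (\<gamma> b s + pos (\<sigma> b s)) (pos s + \<phi> b) \<le> \<epsilon> \<and>
               dist (- \<gamma> b s + pos s) (pos (\<sigma> b s) + - \<phi> b) \<le> \<epsilon>))"

definition model_action :: "'f::group_add set \<Rightarrow> ('f \<Rightarrow> 's \<Rightarrow> 'g::group_add) \<Rightarrow> ('f \<Rightarrow> 's \<Rightarrow> 's) \<Rightarrow>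
    'f \<Rightarrow> ('g \<times> 's) bijection" where
  "model_action B \<gamma> \<sigma> = free_ext B (\<lambda>b. skew_bij (\<gamma> b) (\<sigma> b))"

lemma model_action:
  fixes \<Gamma> :: "'g::group_add set" and B :: "'f::group_add set"
  assumes \<Gamma>: "is_subgroup \<Gamma>" and fb: "free_basis B"
    and gens: "\<And>b. b \<in> B \<Longrightarrow> \<sigma> b permutes S \<and> range (\<gamma> b) \<subseteq> \<Gamma>"
  defines "c \<equiv> \<lambda>f. skew_cocycle (model_action B \<gamma> \<sigma> f)" and "\<pi> \<equiv> \<lambda>f. skew_perm (model_action B \<gamma> \<sigma> f)"
  shows "c (x + y) s = c x s + c y (\<pi> x s)" "\<pi> (x + y) = \<pi> y \<circ> \<pi> x" "\<pi> 0 = id"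
    "\<pi> f permutes S" "c f s \<in> \<Gamma>"
    and "b \<in> B \<Longrightarrow> c b = \<gamma> b" "b \<in> B \<Longrightarrow> \<pi> b = \<sigma> b"
    and "b \<in> B \<Longrightarrow> c (- b) = (\<lambda>s. - \<gamma> b (inv (\<sigma> b) s))" "b \<in> B \<Longrightarrow> \<pi> (- b) = inv (\<sigma> b)"
proof -
  define \<Phi> where "\<Phi> = model_action B \<gamma> \<sigma>"
  have \<Phi>_add: "\<Phi> (x + y) = \<Phi> x + \<Phi> y" for x y
    unfolding \<Phi>_def model_action_def by (rule free_ext_add[OF fb])
  have \<Phi>_in: "\<Phi> f \<in> skew_group \<Gamma> S" for f
    unfolding \<Phi>_def model_action_def
  proof (rule free_ext_in_subgroup[OF fb skew_group_subgroup[OF \<Gamma>]])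
    show "skew_bij (\<gamma> b) (\<sigma> b) \<in> skew_group \<Gamma> S" if "b \<in> B" for b
      using gens[OF that] unfolding skew_group_def by blast
  qed
  have "skew_cocycle (\<Phi> (x + y)) s = skew_cocycle (\<Phi> x) s + skew_cocycle (\<Phi> y) (skew_perm (\<Phi> x) s)"
    "skew_perm (\<Phi> (x + y)) = skew_perm (\<Phi> y) \<circ> skew_perm (\<Phi> x)"
    unfolding \<Phi>_add by (rule skew_parts_add[OF \<Phi>_in \<Phi>_in])+
  then show "c (x + y) s = c x s + c y (\<pi> x s)" "\<pi> (x + y) = \<pi> y \<circ> \<pi> x"
    by (simp_all add: c_def \<pi>_def \<Phi>_def)
  show "\<pi> 0 = id"
    using additive_uminus(1)[of \<Phi>, OF \<Phi>_add] skew_parts_skew_bij(2)[of id "\<lambda>_. 0"]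
    by (simp add: \<pi>_def \<Phi>_def skew_bij_0)
  show "\<pi> f permutes S" "c f s \<in> \<Gamma>"
    using skew_group_elem(2,3)[OF \<Phi>_in] by (simp_all add: c_def \<pi>_def \<Phi>_def)
  assume b: "b \<in> B"
  have bij: "bij (\<sigma> b)"
    using gens[OF b] permutes_bij by blast
  have "\<Phi> b = skew_bij (\<gamma> b) (\<sigma> b)"
    unfolding \<Phi>_def model_action_def using free_ext_basis[OF fb b] .
  moreover have "\<Phi> (- b) = skew_bij (\<lambda>s. - \<gamma> b (inv (\<sigma> b) s)) (inv (\<sigma> b))"
    unfolding additive_uminus(2)[of \<Phi>, OF \<Phi>_add] calculation skew_bij_uminus[OF bij] ..
  ultimately show "c b = \<gamma> b" "\<pi> b = \<sigma> b" "c (- b) = (\<lambda>s. - \<gamma> b (inv (\<sigma> b) s))" "\<pi> (- b) = inv (\<sigma> b)"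
    using bij bij_imp_bij_inv[OF bij] by (simp_all add: c_def \<pi>_def \<Phi>_def skew_parts_skew_bij)
qed

definition model_map :: "'f::group_add set \<Rightarrow> ('f \<Rightarrow> 's \<Rightarrow> 'g::group_add) \<Rightarrow> ('f \<Rightarrow> 's \<Rightarrow> 's) \<Rightarrow>
    ('s \<Rightarrow> 'g) \<Rightarrow> 's \<Rightarrow> 'f \<Rightarrow> 'g" where
  "model_map B \<gamma> \<sigma> pos s0 f =
     skew_cocycle (model_action B \<gamma> \<sigma> f) s0 + pos (skew_perm (model_action B \<gamma> \<sigma> f) s0)"

lemma model_map_perturbation:
  fixes \<Gamma> :: "'g::{group_add, metric_space} set" and B :: "'f::group_add set"
  assumes \<Gamma>: "is_subgroup \<Gamma>" and fb: "free_basis B" and hom: "is_hom \<phi>"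
    and left_inv: "\<And>g x y::'g. dist (g + x) (g + y) = dist x y"
    and model: "finite_model \<Gamma> \<phi> B \<epsilon> S s0 pos \<sigma> \<gamma>"
  shows "perturbation \<epsilon> (B \<union> uminus ` B) \<phi> (model_map B \<gamma> \<sigma> pos s0)"
  unfolding perturbation_def
proof (intro allI ballI)
  note model = model[unfolded finite_model_def]
  note act = model_action[OF \<Gamma> fb, of \<sigma> S \<gamma>]
  define c where "c f = skew_cocycle (model_action B \<gamma> \<sigma> f)" for f
  define \<pi> where "\<pi> f = skew_perm (model_action B \<gamma> \<sigma> f)" for f
  have \<psi>: "model_map B \<gamma> \<sigma> pos s0 f = c f s0 + pos (\<pi> f s0)" for f
    by (simp add: model_map_def c_def \<pi>_def)
  fix f s assume "s \<in> B \<union> uminus ` B"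
  have u: "\<pi> f s0 \<in> S"
    using act(4)[of f] model by (simp add: \<pi>_def permutes_in_image)
  consider "s \<in> B" | b where "b \<in> B" "s = - b"
    using \<open>s \<in> B \<union> uminus ` B\<close> by blast
  then show "dist (model_map B \<gamma> \<sigma> pos s0 (f + s)) (model_map B \<gamma> \<sigma> pos s0 f + \<phi> s) \<le> \<epsilon>"
  proof cases
    case 1
    have "model_map B \<gamma> \<sigma> pos s0 (f + s) = c f s0 + (\<gamma> s (\<pi> f s0) + pos (\<sigma> s (\<pi> f s0)))"
      using 1 model act(1,2,6,7) by (simp add: \<psi> c_def \<pi>_def add.assoc)
    moreover have "model_map B \<gamma> \<sigma> pos s0 f + \<phi> s = c f s0 + (pos (\<pi> f s0) + \<phi> s)"
      by (simp add: \<psi> add.assoc)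
    ultimately show ?thesis
      using model 1 u by (simp add: left_inv)
  next
    case 2
    define v where "v = inv (\<sigma> b) (\<pi> f s0)"
    have \<sigma>b: "\<sigma> b permutes S"
      using model 2 by blast
    have v: "\<pi> f s0 = \<sigma> b v" "inv (\<sigma> b) (\<sigma> b v) = v" "v \<in> S"
      using \<sigma>b u permutes_inv[OF \<sigma>b] by (auto simp: v_def permutes_inverses permutes_in_image)
    have "model_map B \<gamma> \<sigma> pos s0 (f + s) = c f s0 + (- \<gamma> b v + pos v)"
      using 2 v(1,2) model act(1,2,8,9)
      by (simp add: \<psi> c_def \<pi>_def add.assoc del: add_uminus_conv_diff)
    moreover have "model_map B \<gamma> \<sigma> pos s0 f + \<phi> s = c f s0 + (pos (\<sigma> b v) + - \<phi> b)"
      using 2 v(1) hom additive_uminus(2)[of \<phi> b]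
      by (simp add: \<psi> add.assoc is_hom_def del: add_uminus_conv_diff)
    ultimately show ?thesis
      using model 2 v(3) by (simp add: left_inv)
  qed
qed

lemma model_map_virtual_hom:
  fixes \<Gamma> :: "'g::{group_add, metric_space} set" and B :: "'f::group_add set"
  assumes \<Gamma>: "is_subgroup \<Gamma>" and fb: "free_basis B"
    and model: "finite_model \<Gamma> \<phi> B \<epsilon> S s0 pos \<sigma> \<gamma>"
  shows "virtually_hom_into (model_map B \<gamma> \<sigma> pos s0) \<Gamma>"
proof -
  note model = model[unfolded finite_model_def]
  note act = model_action[OF \<Gamma> fb, of \<sigma> S \<gamma>]
  define c where "c f = skew_cocycle (model_action B \<gamma> \<sigma> f)" for f
  define \<pi> where "\<pi> f = skew_perm (model_action B \<gamma> \<sigma> f)" for f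
  have \<psi>: "model_map B \<gamma> \<sigma> pos s0 f = c f s0 + pos (\<pi> f s0)" for f
    by (simp add: model_map_def c_def \<pi>_def)
  have "range (\<lambda>f. \<pi> f s0) \<subseteq> S"
    using act(4) model by (auto simp: \<pi>_def permutes_in_image)
  then have "finite (range (\<lambda>f. \<pi> f s0))"
    using model finite_subset by blast
  then have F': "is_subgroup {f. \<pi> f s0 = s0}" "finite_index {f. \<pi> f s0 = s0}"
    using stabilizer_finite_index[of \<pi> s0] act(2,3) model by (simp_all add: \<pi>_def)
  show ?thesis
    unfolding virtually_hom_into_def
  proof (intro exI[of _ "{f. \<pi> f s0 = s0}"] conjI ballI allI F')
    show "model_map B \<gamma> \<sigma> pos s0 (f1 + f2) = model_map B \<gamma> \<sigma> pos s0 f1 + model_map B \<gamma> \<sigma> pos s0 f2"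
      if "f1 \<in> {f. \<pi> f s0 = s0}" for f1 f2
      using that model act(1,2) by (simp add: \<psi> c_def \<pi>_def add.assoc)
    show "model_map B \<gamma> \<sigma> pos s0 ` {f. \<pi> f s0 = s0} \<subseteq> \<Gamma>"
      using model act(5) by (auto simp: \<psi> c_def \<pi>_def)
  qed
qed

section \<open>Integral transport plans\<close>

lemma pivot_value:
  fixes e z :: "'i \<Rightarrow> real"
  assumes "finite I" "j \<in> I" "e j \<noteq> 0" "(\<Sum>i\<in>I. e i * z i) = 0"
  shows "z j = - (\<Sum>i\<in>I - {j}. e i * z i) / e j"
  using assms by (simp add: sum.remove field_simps)

lemma pivot_elimination:
  fixes e f z :: "'i \<Rightarrow> real"
  assumes "finite I" "j \<in> I" "e j \<noteq> 0" "(\<Sum>i\<in>I. e i * z i) = 0"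
  shows "(\<Sum>i\<in>I. f i * z i) = (\<Sum>i\<in>I - {j}. (f i - f j * e i / e j) * z i)"
proof -
  have "(\<Sum>i\<in>I - {j}. e i * z i) = - (e j * z j)"
    using assms(4) sum.remove[OF assms(1,2), of "\<lambda>i. e i * z i"] by linarith
  then have "f j / e j * (\<Sum>i\<in>I - {j}. e i * z i) = - (f j * z j)"
    using assms(3) by simp
  then have "(\<Sum>i\<in>I - {j}. (f i - f j * e i / e j) * z i) = (\<Sum>i\<in>I - {j}. f i * z i) + f j * z j"
    by (simp add: sum_subtractf sum_distrib_left algebra_simps)
  then show ?thesis
    using sum.remove[OF assms(1,2), of "\<lambda>i. f i * z i"] by simp
qed

lemma back_substitution_error:
  fixes e x y :: "'i \<Rightarrow> real"
  assumes I: "finite I" and j: "j \<in> I" "e j \<noteq> 0" and ex: "(\<Sum>i\<in>I. e i * x i) = 0" and \<delta>: "\<delta> > 0"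
  defines "\<delta>' \<equiv> \<delta> * (\<bar>e j\<bar> / (1 + (\<Sum>i\<in>I - {j}. \<bar>e i\<bar>) + \<bar>e j\<bar>))"
  shows "0 < \<delta>'" "\<delta>' \<le> \<delta>"
    and "\<forall>i\<in>I - {j}. \<bar>y i - x i\<bar> < \<delta>' \<Longrightarrow> \<bar>- (\<Sum>i\<in>I - {j}. e i * y i) / e j - x j\<bar> < \<delta>"
proof -
  define A where "A = (\<Sum>i\<in>I - {j}. \<bar>e i\<bar>)"
  have A0: "A \<ge> 0"
    unfolding A_def by (simp add: sum_nonneg)
  define D where "D = 1 + A + \<bar>e j\<bar>"
  have D: "D > 0" "\<bar>e j\<bar> / D \<le> 1" "A / D < 1"
    using A0 by (simp_all add: D_def)
  have \<delta>'_D: "\<delta>' = \<delta> * (\<bar>e j\<bar> / D)"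
    by (simp add: \<delta>'_def D_def A_def)
  show "0 < \<delta>'"
    using D(1) \<delta> j(2) by (simp add: \<delta>'_D)
  show "\<delta>' \<le> \<delta>"
    unfolding \<delta>'_D using D(2) \<delta> by (intro mult_left_le) simp_all
  have "A * \<delta>' = (\<delta> * \<bar>e j\<bar>) * (A / D)"
    by (simp add: \<delta>'_D)
  also have "\<dots> < (\<delta> * \<bar>e j\<bar>) * 1"
    using D(3) \<delta> j(2) by (intro mult_strict_left_mono) simp_all
  finally have small: "A * \<delta>' < \<delta> * \<bar>e j\<bar>"
    by simp
  assume close: "\<forall>i\<in>I - {j}. \<bar>y i - x i\<bar> < \<delta>'"
  have "\<bar>- (\<Sum>i\<in>I - {j}. e i * y i) / e j - x j\<bar> = \<bar>\<Sum>i\<in>I - {j}. e i * (y i - x i)\<bar> / \<bar>e j\<bar>"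
    using pivot_value[OF I j ex] j(2)
    by (simp add: sum_subtractf right_diff_distrib field_simps abs_minus_commute)
  also have "\<dots> \<le> (\<Sum>i\<in>I - {j}. \<bar>e i\<bar> * \<delta>') / \<bar>e j\<bar>"
    using close by (intro divide_right_mono order.trans[OF sum_abs] sum_mono)
      (auto simp: abs_mult intro!: mult_left_mono dest!: bspec less_imp_le)
  also have "\<dots> < \<delta>"
    using small j(2) by (simp add: A_def sum_distrib_right[symmetric] divide_less_eq)
  finally show "\<bar>- (\<Sum>i\<in>I - {j}. e i * y i) / e j - x j\<bar> < \<delta>" .
qed

lemma rat_dense_fun:
  fixes x :: "'i \<Rightarrow> real"
  assumes "\<delta> > 0"
  shows "\<exists>y. \<forall>i. y i \<in> \<rat> \<and> \<bar>y i - x i\<bar> < \<delta>"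
proof -
  have "\<forall>i. \<exists>r. r \<in> \<rat> \<and> x i - \<delta> < r \<and> r < x i + \<delta>"
  proof
    fix i
    show "\<exists>r. r \<in> \<rat> \<and> x i - \<delta> < r \<and> r < x i + \<delta>"
      using Rats_dense_in_real[of "x i - \<delta>" "x i + \<delta>"] assms by auto
  qed
  then have "\<exists>y. \<forall>i. y i \<in> \<rat> \<and> x i - \<delta> < y i \<and> y i < x i + \<delta>"
    by (rule choice)
  then obtain y where y: "\<forall>i. y i \<in> \<rat> \<and> x i - \<delta> < y i \<and> y i < x i + \<delta>"
    by blast
  have "\<bar>y i - x i\<bar> < \<delta>" for i
    using y[rule_format, of i] unfolding abs_less_iff by linarith
  then show ?thesis
    using y by blast
qed

text \<open>Rational solutions are dense in the real solutions of a homogeneous linear system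
  with rational coefficients.  Induction on the number of equations, eliminating one variable.\<close>
lemma rat_approx:
  fixes E :: "('i \<Rightarrow> real) list" and x :: "'i \<Rightarrow> real"
  assumes "finite I" "\<forall>e\<in>set E. \<forall>i\<in>I. e i \<in> \<rat>" "\<forall>e\<in>set E. (\<Sum>i\<in>I. e i * x i) = 0" "\<delta> > 0"
  shows "\<exists>y. (\<forall>i\<in>I. y i \<in> \<rat>) \<and> (\<forall>e\<in>set E. (\<Sum>i\<in>I. e i * y i) = 0) \<and> (\<forall>i\<in>I. \<bar>y i - x i\<bar> < \<delta>)"
  using assms
proof (induction "length E" arbitrary: E I \<delta> rule: less_induct)
  case less
  show ?case
  proof (cases E)
    case Nil
    then show ?thesis
      using rat_dense_fun[OF less.prems(4), of x] by auto
  next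
    case (Cons e E')
    have prems: "finite I" "\<forall>f\<in>set (e # E'). \<forall>i\<in>I. f i \<in> \<rat>" "\<forall>f\<in>set (e # E'). (\<Sum>i\<in>I. f i * x i) = 0"
      using less.prems Cons by simp_all
    show ?thesis
    proof (cases "\<forall>i\<in>I. e i = 0")
      case True
      then show ?thesis
        using less.hyps[of E' I \<delta>] less.prems(4) prems Cons by auto
    next
      case False
      then obtain j where j: "j \<in> I" "e j \<noteq> 0"
        by blast
      define I' where "I' = I - {j}"
      define elim where "elim f i = f i - f j * e i / e j" for f :: "'i \<Rightarrow> real" and i
      have ex: "(\<Sum>i\<in>I. e i * x i) = 0"
        using prems(3) by simp
      define \<delta>' where "\<delta>' = \<delta> * (\<bar>e j\<bar> / (1 + (\<Sum>i\<in>I - {j}. \<bar>e i\<bar>) + \<bar>e j\<bar>))"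
      note \<delta>' = back_substitution_error[OF less.prems(1) j ex less.prems(4), folded \<delta>'_def]
      have "\<forall>f\<in>set (map elim E'). (\<Sum>i\<in>I'. f i * x i) = 0"
        using prems(3) pivot_elimination[OF less.prems(1) j ex] by (auto simp: I'_def elim_def)
      moreover have "\<forall>f\<in>set (map elim E'). \<forall>i\<in>I'. f i \<in> \<rat>"
        using prems(2) j unfolding elim_def I'_def by (auto intro!: Rats_diff Rats_mult Rats_divide)
      ultimately obtain y' where y': "\<forall>i\<in>I'. y' i \<in> \<rat>" "\<forall>f\<in>set (map elim E'). (\<Sum>i\<in>I'. f i * y' i) = 0"
          "\<forall>i\<in>I'. \<bar>y' i - x i\<bar> < \<delta>'"
        using less.hyps[of "map elim E'" I' \<delta>'] less.prems(1) \<delta>'(1) Cons unfolding I'_def by auto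
      define y where "y = y'(j := - (\<Sum>i\<in>I'. e i * y' i) / e j)"
      have y_I': "(\<Sum>i\<in>I'. f i * y i) = (\<Sum>i\<in>I'. f i * y' i)" for f
        by (rule sum.cong) (auto simp: y_def I'_def)
      have ey: "(\<Sum>i\<in>I. e i * y i) = 0"
        using less.prems(1) j y_I'[of e] by (simp add: sum.remove I'_def y_def)
      have fy: "(\<Sum>i\<in>I. f i * y i) = 0" if "f \<in> set E'" for f
        using pivot_elimination[OF less.prems(1) j ey, of f] y'(2) y_I'[of "elim f"] that
        by (simp add: I'_def elim_def)
      have "\<bar>y j - x j\<bar> < \<delta>"
        using \<delta>'(3)[of y'] y'(3) by (simp add: y_def I'_def)
      moreover have "y j \<in> \<rat>"
        using y'(1) prems(2) j unfolding y_def I'_def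
        by (auto intro!: Rats_divide Rats_minus_iff[THEN iffD2] Rats_mult)
      ultimately have "y i \<in> \<rat> \<and> \<bar>y i - x i\<bar> < \<delta>" if "i \<in> I" for i
        using y'(1,3) \<delta>'(2) that by (cases "i = j") (force simp: y_def I'_def)+
      then show ?thesis
        using ey fy Cons by (intro exI[of _ y]) auto
    qed
  qed
qed

lemma rat_common_denominator:
  assumes "finite I" "\<forall>i\<in>I. y i \<in> \<rat>"
  shows "\<exists>N::nat. N > 0 \<and> (\<forall>i\<in>I. real N * y i \<in> \<int>)"
  using assms
proof (induction I rule: finite_induct)
  case empty
  then show ?case by (intro exI[of _ 1]) simp
next
  case (insert j F)
  obtain N where N: "N > 0" "\<forall>i\<in>F. real N * y i \<in> \<int>"
    using insert by auto
  have "y j \<in> \<rat>"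
    using insert.prems by simp
  then obtain a b where ab: "y j = of_int a / of_int b" "b > 0"
    using Rats_cases' by metis
  have "real (N * nat b) * y i \<in> \<int>" if "i \<in> insert j F" for i
  proof (cases "i = j")
    case True
    have "real (nat b) * y j = of_int a"
      using ab by simp
    then have eq: "real (N * nat b) * y i = of_int (int N * a)"
      using True by (simp add: mult.assoc)
    show ?thesis
      unfolding eq by (rule Ints_of_int)
  next
    case False
    then have int: "real N * y i \<in> \<int>"
      using N(2) that by simp
    have eq: "real (N * nat b) * y i = of_int b * (real N * y i)"
      using ab(2) by simp
    show ?thesis
      unfolding eq using int by (rule Ints_mult[OF Ints_of_int])
  qed
  then show ?case
    using N(1) ab(2) by (intro exI[of _ "N * nat b"]) simp
qed

text \<open>A nonnegative real solution of a rational homogeneous system can be replaced by a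
  rational one with the same support: add the equations \<open>x i = 0\<close> for the zero coordinates and
  approximate more closely than the smallest positive coordinate.\<close>
lemma rational_solution_same_support:
  fixes x :: "'i \<Rightarrow> real" and E :: "('i \<Rightarrow> real) set"
  assumes I: "finite I" and E: "finite E" and rat: "\<forall>e\<in>E. \<forall>i\<in>I. e i \<in> \<rat>"
    and sol: "\<forall>e\<in>E. (\<Sum>i\<in>I. e i * x i) = 0" and nonneg: "\<forall>i\<in>I. 0 \<le> x i"
  obtains y where "\<forall>e\<in>E. (\<Sum>i\<in>I. e i * y i) = 0"
    "\<And>i. i \<in> I \<Longrightarrow> y i \<in> \<rat> \<and> 0 \<le> y i \<and> (0 < y i \<longleftrightarrow> 0 < x i)"
proof -
  define Z where "Z = (\<lambda>i k. of_bool (k = i) :: real) ` {i\<in>I. x i = 0}"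
  have coord: "(\<Sum>k\<in>I. of_bool (k = i) * u k) = u i" if "i \<in> I" for i and u :: "'i \<Rightarrow> real"
    using that I by simp
  have "finite (E \<union> Z)"
    using E I by (simp add: Z_def)
  then obtain Es where Es: "set Es = E \<union> Z"
    using finite_list by blast
  define \<delta> where "\<delta> = Min (insert 1 {x i | i. i \<in> I \<and> 0 < x i})"
  have fin: "finite {x i | i. i \<in> I \<and> 0 < x i}"
    using I by simp
  have \<delta>_pos: "0 < \<delta>"
    using fin by (auto simp: \<delta>_def)
  have \<delta>_le: "\<delta> \<le> x i" if "i \<in> I" "0 < x i" for i
    unfolding \<delta>_def using fin that by (intro Min_le) auto
  have "\<forall>e\<in>set Es. \<forall>i\<in>I. e i \<in> \<rat>"
    using rat by (auto simp: Es Z_def)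
  moreover have "\<forall>e\<in>set Es. (\<Sum>i\<in>I. e i * x i) = 0"
    using sol coord by (auto simp: Es Z_def)
  ultimately obtain y where y: "\<forall>i\<in>I. y i \<in> \<rat>" "\<forall>e\<in>set Es. (\<Sum>i\<in>I. e i * y i) = 0"
      "\<forall>i\<in>I. \<bar>y i - x i\<bar> < \<delta>"
    using rat_approx[OF I _ _ \<delta>_pos] by blast
  have supp: "0 \<le> y i \<and> (0 < y i \<longleftrightarrow> 0 < x i)" if i: "i \<in> I" for i
  proof (cases "x i = 0")
    case True
    then have "(\<lambda>k. of_bool (k = i)) \<in> set Es"
      using i by (auto simp: Es Z_def)
    then have "y i = 0"
      using y(2) coord[OF i, of y] by auto
    then show ?thesis
      using True by simp
  next
    case False
    then have x_pos: "0 < x i"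
      using nonneg i by (simp add: order_less_le)
    have "\<bar>y i - x i\<bar> < \<delta>"
      using y(3) i by blast
    then have "0 < y i"
      using \<delta>_le[OF i x_pos] by (simp add: abs_less_iff)
    then show ?thesis
      using x_pos by simp
  qed
  show ?thesis
    using that y(1,2) supp Es by auto
qed

lemma integral_solution_same_support:
  fixes x :: "'i \<Rightarrow> real" and E :: "('i \<Rightarrow> real) set"
  assumes I: "finite I" and E: "finite E" and rat: "\<forall>e\<in>E. \<forall>i\<in>I. e i \<in> \<rat>"
    and sol: "\<forall>e\<in>E. (\<Sum>i\<in>I. e i * x i) = 0" and nonneg: "\<forall>i\<in>I. 0 \<le> x i"
  shows "\<exists>z::'i \<Rightarrow> nat. (\<forall>e\<in>E. (\<Sum>i\<in>I. e i * real (z i)) = 0) \<and> (\<forall>i\<in>I. 0 < z i \<longleftrightarrow> 0 < x i)"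
proof -
  obtain y where y: "\<forall>e\<in>E. (\<Sum>i\<in>I. e i * y i) = 0"
    "\<And>i. i \<in> I \<Longrightarrow> y i \<in> \<rat> \<and> 0 \<le> y i \<and> (0 < y i \<longleftrightarrow> 0 < x i)"
    using rational_solution_same_support[OF assms] by blast
  obtain N :: nat where N: "N > 0" "\<forall>i\<in>I. real N * y i \<in> \<int>"
    using rat_common_denominator[OF I] y(2) by blast
  define z where "z i = nat \<lfloor>real N * y i\<rfloor>" for i
  have z: "real (z i) = real N * y i" if i: "i \<in> I" for i
  proof -
    obtain k where k: "real N * y i = of_int k"
      using N(2) i Ints_cases by metis
    have "0 \<le> real N * y i"
      using y(2)[OF i] by simp
    then show ?thesis
      using k by (simp add: z_def)
  qed
  show ?thesis
  proof (intro exI[of _ z] conjI ballI)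
    fix e assume "e \<in> E"
    moreover have "(\<Sum>i\<in>I. e i * real (z i)) = real N * (\<Sum>i\<in>I. e i * y i)"
      using z by (simp add: sum_distrib_left mult.left_commute)
    ultimately show "(\<Sum>i\<in>I. e i * real (z i)) = 0"
      using y(1) by simp
  next
    fix i assume i: "i \<in> I"
    have "0 < z i \<longleftrightarrow> 0 < real N * y i"
      using z[OF i] by (metis of_nat_0_less_iff)
    then show "0 < z i \<longleftrightarrow> 0 < x i"
      using y(2)[OF i] N(1) by (simp add: zero_less_mult_iff)
  qed
qed

lemma sum_indicator_minus_point:
  fixes u :: "'i \<Rightarrow> real"
  assumes "finite I" "R \<subseteq> I" "a \<in> I"
  shows "(\<Sum>i\<in>I. (of_bool (i \<in> R) - of_bool (i = a)) * u i) = sum u R - u a"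
proof -
  have "I \<inter> {i. i \<in> R} = R"
    using assms(2) by blast
  then show ?thesis
    using assms by (simp add: left_diff_distrib sum_subtractf)
qed

lemma integral_transport_plan:
  fixes W :: "'b \<Rightarrow> nat \<Rightarrow> nat \<Rightarrow> real" and \<mu> :: "nat \<Rightarrow> real"
  assumes B: "finite B" and W0: "\<And>b p q. 0 \<le> W b p q" and \<mu>0: "\<And>p. 0 \<le> \<mu> p"
    and row: "\<And>b p. b \<in> B \<Longrightarrow> p < m \<Longrightarrow> (\<Sum>q<m. W b p q) = \<mu> p"
    and col: "\<And>b q. b \<in> B \<Longrightarrow> q < m \<Longrightarrow> (\<Sum>p<m. W b p q) = \<mu> q"
  shows "\<exists>(n::nat \<Rightarrow> nat) (Z::'b \<Rightarrow> nat \<Rightarrow> nat \<Rightarrow> nat).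
     (\<forall>b\<in>B. \<forall>p<m. (\<Sum>q<m. Z b p q) = n p) \<and> (\<forall>b\<in>B. \<forall>q<m. (\<Sum>p<m. Z b p q) = n q) \<and>
     (\<forall>p<m. 0 < n p \<longleftrightarrow> 0 < \<mu> p) \<and> (\<forall>b\<in>B. \<forall>p<m. \<forall>q<m. 0 < Z b p q \<longleftrightarrow> 0 < W b p q)"
proof -
  define I :: "(nat + 'b \<times> nat \<times> nat) set"
    where "I = Inl ` {..<m} \<union> Inr ` (B \<times> {..<m} \<times> {..<m})"
  define x where "x = case_sum \<mu> (\<lambda>(b, p, q). W b p q)"
  define rowR :: "'b \<Rightarrow> nat \<Rightarrow> (nat + 'b \<times> nat \<times> nat) set"
    where "rowR b p = (\<lambda>q. Inr (b, p, q)) ` {..<m}" for b p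
  define colR :: "'b \<Rightarrow> nat \<Rightarrow> (nat + 'b \<times> nat \<times> nat) set"
    where "colR b q = (\<lambda>p. Inr (b, p, q)) ` {..<m}" for b q
  define eqn :: "(nat + 'b \<times> nat \<times> nat) set \<Rightarrow> nat + 'b \<times> nat \<times> nat \<Rightarrow> nat + 'b \<times> nat \<times> nat \<Rightarrow> real"
    where "eqn R a i = of_bool (i \<in> R) - of_bool (i = a)" for R a i
  define E where "E = (\<lambda>(b, p). eqn (rowR b p) (Inl p)) ` (B \<times> {..<m}) \<union>
      (\<lambda>(b, q). eqn (colR b q) (Inl q)) ` (B \<times> {..<m})"
  have I: "finite I"
    using B by (simp add: I_def)
  have row_sum: "(\<Sum>i\<in>I. eqn (rowR b p) (Inl p) i * u i) = (\<Sum>q<m. u (Inr (b, p, q))) - u (Inl p)"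
    if "b \<in> B" "p < m" for b p and u :: "nat + 'b \<times> nat \<times> nat \<Rightarrow> real"
    using that sum_indicator_minus_point[OF I, of "rowR b p" "Inl p" u]
    by (auto simp: eqn_def rowR_def I_def sum.reindex inj_on_def)
  have col_sum: "(\<Sum>i\<in>I. eqn (colR b q) (Inl q) i * u i) = (\<Sum>p<m. u (Inr (b, p, q))) - u (Inl q)"
    if "b \<in> B" "q < m" for b q and u :: "nat + 'b \<times> nat \<times> nat \<Rightarrow> real"
    using that sum_indicator_minus_point[OF I, of "colR b q" "Inl q" u]
    by (auto simp: eqn_def colR_def I_def sum.reindex inj_on_def)
  have "\<exists>z::nat + 'b \<times> nat \<times> nat \<Rightarrow> nat. (\<forall>e\<in>E. (\<Sum>i\<in>I. e i * real (z i)) = 0) \<and>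
      (\<forall>i\<in>I. 0 < z i \<longleftrightarrow> 0 < x i)"
  proof (rule integral_solution_same_support[OF I])
    show "finite E"
      using B by (simp add: E_def)
    show "\<forall>e\<in>E. \<forall>i\<in>I. e i \<in> \<rat>"
      by (auto simp: E_def eqn_def of_bool_def)
    show "\<forall>e\<in>E. (\<Sum>i\<in>I. e i * x i) = 0"
      using row col by (auto simp: E_def row_sum col_sum x_def)
    show "\<forall>i\<in>I. 0 \<le> x i"
      using W0 \<mu>0 by (auto simp: I_def x_def)
  qed
  then obtain z :: "nat + 'b \<times> nat \<times> nat \<Rightarrow> nat" where
    z: "\<forall>e\<in>E. (\<Sum>i\<in>I. e i * real (z i)) = 0" "\<forall>i\<in>I. 0 < z i \<longleftrightarrow> 0 < x i"
    by blast
  define n where "n p = z (Inl p)" for p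
  define Z where "Z b p q = z (Inr (b, p, q))" for b p q
  have "real (\<Sum>q<m. Z b p q) = real (n p)" if "b \<in> B" "p < m" for b p
  proof -
    have "eqn (rowR b p) (Inl p) \<in> E"
      using that unfolding E_def by force
    then show ?thesis
      using z(1) row_sum[OF that, of "\<lambda>i. real (z i)"] by (simp add: Z_def n_def)
  qed
  moreover have "real (\<Sum>p<m. Z b p q) = real (n q)" if "b \<in> B" "q < m" for b q
  proof -
    have "eqn (colR b q) (Inl q) \<in> E"
      using that unfolding E_def by force
    then show ?thesis
      using z(1) col_sum[OF that, of "\<lambda>i. real (z i)"] by (simp add: Z_def n_def)
  qed
  moreover have "0 < n p \<longleftrightarrow> 0 < \<mu> p" if "p < m" for p
    using z(2) that by (auto simp: n_def x_def I_def)
  moreover have "0 < Z b p q \<longleftrightarrow> 0 < W b p q" if "b \<in> B" "p < m" "q < m" for b p q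
    using z(2) that by (auto simp: Z_def x_def I_def)
  ultimately show ?thesis
    by (intro exI[of _ n] exI[of _ Z]) (simp del: of_nat_sum)
qed

lemma fibrewise_bij:
  assumes "finite A" "finite C" "\<And>p. card {a\<in>A. fa a = p} = card {c\<in>C. fc c = p}"
  obtains h where "bij_betw h A C" "\<And>a. a \<in> A \<Longrightarrow> fc (h a) = fa a"
proof -
  have "\<forall>p. \<exists>h. bij_betw h {a\<in>A. fa a = p} {c\<in>C. fc c = p}"
    using assms by (intro allI finite_same_card_bij) simp_all
  then have "\<exists>H. \<forall>p. bij_betw (H p) {a\<in>A. fa a = p} {c\<in>C. fc c = p}"
    by (rule choice)
  then obtain H where H: "\<And>p. bij_betw (H p) {a\<in>A. fa a = p} {c\<in>C. fc c = p}"
    by blast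
  define h where "h a = H (fa a) a" for a
  have h: "bij_betw h {a\<in>A. fa a = p} {c\<in>C. fc c = p}" for p
    by (rule bij_betw_cong[THEN iffD1, OF _ H[of p]]) (simp add: h_def)
  have "bij_betw h (\<Union>p. {a\<in>A. fa a = p}) (\<Union>p. {c\<in>C. fc c = p})"
    by (rule bij_betw_UNION_disjoint) (auto simp: disjoint_family_on_def intro: h)
  moreover have "(\<Union>p. {a\<in>A. fa a = p}) = A" "(\<Union>p. {c\<in>C. fc c = p}) = C"
    by auto
  moreover have "fc (h a) = fa a" if "a \<in> A" for a
    using bij_betwE[OF h[of "fa a"]] that by auto
  ultimately show ?thesis
    using that by auto
qed

lemma slot_permutation:
  fixes Z :: "nat \<Rightarrow> nat \<Rightarrow> nat" and n :: "nat \<Rightarrow> nat"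
  assumes row: "\<And>p. p < m \<Longrightarrow> (\<Sum>q<m. Z p q) = n p"
    and col: "\<And>q. q < m \<Longrightarrow> (\<Sum>p<m. Z p q) = n q"
  obtains \<sigma> where "\<sigma> permutes (SIGMA p:{..<m}. {..<n p})"
    "\<And>s. s \<in> (SIGMA p:{..<m}. {..<n p}) \<Longrightarrow> 0 < Z (fst s) (fst (\<sigma> s))"
proof -
  define Sl where "Sl = (SIGMA p:{..<m}. {..<n p})"
  define R where "R = (SIGMA p:{..<m}. SIGMA q:{..<m}. {..<Z p q})"
  have fin: "finite Sl" "finite R"
    by (simp_all add: Sl_def R_def)
  have card_Sl: "card {s\<in>Sl. fst s = p} = (if p < m then n p else 0)" for p
  proof -
    have "{s\<in>Sl. fst s = p} = (if p < m then {p} \<times> {..<n p} else {})"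
      by (auto simp: Sl_def)
    then show ?thesis
      by (simp add: card_cartesian_product)
  qed
  have card_R_src: "card {r\<in>R. fst r = p} = (if p < m then n p else 0)" for p
  proof -
    have "{r\<in>R. fst r = p} = (if p < m then {p} \<times> (SIGMA q:{..<m}. {..<Z p q}) else {})"
      by (auto simp: R_def)
    then show ?thesis
      using row[of p] by (simp add: card_cartesian_product)
  qed
  have card_R_tgt: "card {r\<in>R. fst (snd r) = q} = (if q < m then n q else 0)" for q
  proof -
    have "{r\<in>R. fst (snd r) = q} = (\<lambda>(p, t). (p, q, t)) ` (if q < m then SIGMA p:{..<m}. {..<Z p q} else {})"
      by (auto simp: R_def image_iff)
    moreover have "inj_on (\<lambda>(p, t). (p, q, t)) A" for A :: "(nat \<times> nat) set"
      by (auto simp: inj_on_def)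
    ultimately show ?thesis
      using col[of q] by (simp add: card_image)
  qed
  obtain \<rho> where \<rho>: "bij_betw \<rho> Sl R" "\<And>s. s \<in> Sl \<Longrightarrow> fst (\<rho> s) = fst s"
    by (rule fibrewise_bij[OF fin, of fst fst]) (simp_all add: card_Sl card_R_src)
  obtain \<kappa> where \<kappa>: "bij_betw \<kappa> R Sl" "\<And>r. r \<in> R \<Longrightarrow> fst (\<kappa> r) = fst (snd r)"
    by (rule fibrewise_bij[OF fin(2,1), of "\<lambda>r. fst (snd r)" fst]) (simp_all add: card_Sl card_R_tgt)
  have bij: "bij_betw (\<kappa> \<circ> \<rho>) Sl Sl"
    using \<rho>(1) \<kappa>(1) by (rule bij_betw_trans)
  show ?thesis
  proof (rule that[unfolded Sl_def[symmetric]])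
    show "restrict_id (\<kappa> \<circ> \<rho>) Sl permutes Sl"
      using bij_betw_restrict_id[OF bij order.refl] by (intro bij_imp_permutes) auto
    show "0 < Z (fst s) (fst (restrict_id (\<kappa> \<circ> \<rho>) Sl s))" if "s \<in> Sl" for s
    proof -
      obtain p q t where r: "\<rho> s = (p, q, t)"
        by (cases "\<rho> s") auto
      have "\<rho> s \<in> R"
        using \<rho>(1) that by (auto simp: bij_betw_def)
      then have "t < Z p q" "fst (\<kappa> (\<rho> s)) = q"
        using \<kappa>(2) by (auto simp: r R_def)
      moreover have "p = fst s"
        using \<rho>(2)[OF that] by (simp add: r)
      ultimately show ?thesis
        using that by simp
    qed
  qed
qed

section \<open>Cocompact lattices in metric groups\<close>

lemma finite_pos_min:
  assumes "finite B" "\<forall>b\<in>B. \<exists>d>0. P b d" "\<And>b d d'. P b d \<Longrightarrow> 0 < d' \<Longrightarrow> d' \<le> d \<Longrightarrow> P b d'"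
  shows "\<exists>d>0. \<forall>b\<in>B. P b (d::real)"
  using assms(1,2)
proof (induction B rule: finite_induct)
  case empty
  then show ?case by (intro exI[of _ 1]) simp
next
  case (insert x F)
  obtain d1 where d1: "d1 > 0" "\<forall>b\<in>F. P b d1"
    using insert by auto
  obtain d2 where d2: "d2 > 0" "P x d2"
    using insert.prems by auto
  have "P b (min d1 d2)" if "b \<in> insert x F" for b
    using that assms(3)[OF d2(2)] assms(3)[OF d1(2)[rule_format]] d1(1) d2(1) by auto
  then show ?case
    using d1(1) d2(1) by (intro exI[of _ "min d1 d2"]) auto
qed

lemma translate_back_image:
  fixes a \<gamma> :: "'g::group_add"
  shows "(\<lambda>z. - \<gamma> + z) ` ((\<lambda>x. x + a) ` (X \<inter> (\<lambda>x. x + a) -` ((\<lambda>y. \<gamma> + y) ` Y))) =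
    {y \<in> Y. \<gamma> + y + - a \<in> X}"
proof (intro set_eqI iffI)
  fix y assume "y \<in> (\<lambda>z. - \<gamma> + z) ` ((\<lambda>x. x + a) ` (X \<inter> (\<lambda>x. x + a) -` ((\<lambda>y. \<gamma> + y) ` Y)))"
  then obtain x d where xd: "x \<in> X" "d \<in> Y" "x + a = \<gamma> + d" "y = - \<gamma> + (x + a)"
    by blast
  then have "y = d"
    by simp
  moreover have "\<gamma> + y + - a = x"
    using xd(4) by (simp add: add.assoc[symmetric])
  ultimately show "y \<in> {y \<in> Y. \<gamma> + y + - a \<in> X}"
    using xd(1,2) by simp
next
  fix y assume y: "y \<in> {y \<in> Y. \<gamma> + y + - a \<in> X}"
  have "(\<gamma> + y + - a) + a = \<gamma> + y" "y = - \<gamma> + ((\<gamma> + y + - a) + a)"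
    by (simp_all add: add.assoc)
  then show "y \<in> (\<lambda>z. - \<gamma> + z) ` ((\<lambda>x. x + a) ` (X \<inter> (\<lambda>x. x + a) -` ((\<lambda>y. \<gamma> + y) ` Y)))"
    using y by (intro image_eqI[of y] image_eqI[of _ _ "\<gamma> + y + - a"]) auto
qed

locale cocompact_lattice =
  fixes \<Gamma> :: "'g::{group_add, metric_space} set"
  assumes add_cont: "continuous_on UNIV (\<lambda>p::'g \<times> 'g. fst p + snd p)"
    and minus_cont: "continuous_on UNIV (uminus :: 'g \<Rightarrow> 'g)"
    and left_inv: "\<forall>g x y::'g. dist (g + x) (g + y) = dist x y"
    and proper: "\<forall>(x::'g) r. compact (cball x r)"
    and subgrp: "is_subgroup \<Gamma>"
    and discrete: "\<forall>\<gamma>\<in>\<Gamma>. \<exists>e>0. \<forall>\<gamma>'\<in>\<Gamma>. dist \<gamma> \<gamma>' < e \<longrightarrow> \<gamma>' = \<gamma>"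
    and cocompact: "\<exists>K. compact K \<and> (\<forall>g. \<exists>k\<in>K. \<exists>\<gamma>\<in>\<Gamma>. g = k + \<gamma>)"
begin

lemma dist_left [simp]: "dist (g + x) (g + y) = dist x (y::'g)"
  using left_inv by blast

lemma lattice_0: "0 \<in> \<Gamma>"
  and lattice_add: "x \<in> \<Gamma> \<Longrightarrow> y \<in> \<Gamma> \<Longrightarrow> x + y \<in> \<Gamma>"
  and lattice_minus: "x \<in> \<Gamma> \<Longrightarrow> - x \<in> \<Gamma>"
  using subgrp unfolding is_subgroup_def by blast+

lemma continuous_on_add:
  fixes f g :: "'a::topological_space \<Rightarrow> 'g"
  assumes "continuous_on UNIV f" "continuous_on UNIV g"
  shows "continuous_on UNIV (\<lambda>x. f x + g x)"
  using continuous_on_compose[OF continuous_on_Pair[OF assms] continuous_on_subset[OF add_cont]]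
  by (simp add: o_def)

lemma continuous_on_minus:
  fixes f :: "'a::topological_space \<Rightarrow> 'g"
  assumes "continuous_on UNIV f"
  shows "continuous_on UNIV (\<lambda>x. - f x)"
  using continuous_on_compose[OF assms continuous_on_subset[OF minus_cont]] by (simp add: o_def)

lemma continuous_left_translation: "continuous_on UNIV (\<lambda>x::'g. g + x)"
  and continuous_right_translation: "continuous_on UNIV (\<lambda>x::'g. x + g)"
  by (rule continuous_on_add; simp)+

lemma continuous_onD_UNIV:
  "continuous_on UNIV f \<Longrightarrow> e > 0 \<Longrightarrow> \<exists>d>0. \<forall>y. dist y x < d \<longrightarrow> dist (f y) (f x) < e"
  unfolding continuous_on_iff by blast

text \<open>A discrete subgroup is uniformly discrete, by left invariance of the metric.\<close>
lemma lattice_uniformly_discrete: "\<exists>e0>0. \<forall>\<gamma>\<in>\<Gamma>. \<forall>\<gamma>'\<in>\<Gamma>. dist \<gamma> \<gamma>' < e0 \<longrightarrow> \<gamma> = \<gamma>'"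
proof -
  have "\<exists>e>0. \<forall>\<gamma>'\<in>\<Gamma>. dist 0 \<gamma>' < e \<longrightarrow> \<gamma>' = 0"
    using discrete lattice_0 by (rule bspec)
  then obtain e where e: "e > 0" "\<forall>\<gamma>'\<in>\<Gamma>. dist 0 \<gamma>' < e \<longrightarrow> \<gamma>' = 0"
    by blast
  have "\<gamma> = \<gamma>'" if "\<gamma> \<in> \<Gamma>" "\<gamma>' \<in> \<Gamma>" "dist \<gamma> \<gamma>' < e" for \<gamma> \<gamma>'
  proof -
    have "dist 0 (- \<gamma> + \<gamma>') < e"
      using dist_left[of "- \<gamma>" \<gamma> \<gamma>'] that(3) by simp
    then have "- \<gamma> + \<gamma>' = 0"
      using e(2) lattice_add[OF lattice_minus[OF that(1)] that(2)] by blast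
    then show ?thesis
      using add_minus_cancel[of \<gamma> \<gamma>'] by simp
  qed
  then show ?thesis
    using e(1) by blast
qed

text \<open>A closed ball meets \<open>\<Gamma>\<close> in a finite set: it is totally bounded, and each of finitely many
  balls of radius \<open>e0/2\<close> contains at most one lattice point.\<close>
lemma lattice_finite_cball: "finite (\<Gamma> \<inter> cball c r)"
proof -
  obtain e0 where e0: "e0 > 0" "\<forall>\<gamma>\<in>\<Gamma>. \<forall>\<gamma>'\<in>\<Gamma>. dist \<gamma> \<gamma>' < e0 \<longrightarrow> \<gamma> = \<gamma>'"
    using lattice_uniformly_discrete by blast
  have sc: "seq_compact (cball c r)"
    using proper compact_imp_seq_compact by blast
  have e2: "e0/2 > 0"
    using e0(1) by simp
  obtain k :: "'g set" where k: "finite k" "cball c r \<subseteq> (\<Union>x\<in>k. ball x (e0/2))"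
    using seq_compact_imp_totally_bounded[OF sc, rule_format, OF e2] by blast
  define f where "f \<gamma> = (SOME x. x \<in> k \<and> \<gamma> \<in> ball x (e0/2))" for \<gamma>
  have f: "f \<gamma> \<in> k \<and> \<gamma> \<in> ball (f \<gamma>) (e0/2)" if "\<gamma> \<in> cball c r" for \<gamma>
  proof -
    have "\<exists>x. x \<in> k \<and> \<gamma> \<in> ball x (e0/2)"
      using k(2) that by blast
    then show ?thesis
      unfolding f_def by (rule someI_ex)
  qed
  have "inj_on f (\<Gamma> \<inter> cball c r)"
  proof (rule inj_onI)
    fix x y assume x: "x \<in> \<Gamma> \<inter> cball c r" and y: "y \<in> \<Gamma> \<inter> cball c r" and "f x = f y"
    then have "dist (f x) x < e0/2" "dist (f x) y < e0/2"
      using f[of x] f[of y] by auto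
    then have "dist x y < e0"
      using dist_triangle3[of x y "f x"] by linarith
    then show "x = y"
      using e0(2) x y by blast
  qed
  moreover have "f ` (\<Gamma> \<inter> cball c r) \<subseteq> k"
    using f by blast
  ultimately show ?thesis
    using k(1) by (rule inj_on_finite)
qed

lemma countable_lattice: "countable \<Gamma>"
proof -
  have eq: "\<Gamma> = (\<Union>n. \<Gamma> \<inter> cball 0 (real n))"
  proof (intro equalityI subsetI)
    fix x assume "x \<in> \<Gamma>"
    moreover obtain n where "dist 0 x \<le> real n"
      using real_arch_simple by blast
    ultimately show "x \<in> (\<Union>n. \<Gamma> \<inter> cball 0 (real n))"
      by auto
  qed blast
  have "countable (\<Union>n. \<Gamma> \<inter> cball 0 (real n))"
    by (rule countable_UN) (simp_all add: countable_finite lattice_finite_cball)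
  then show ?thesis
    by (subst eq)
qed

lemma compact_fundamental_set: "\<exists>L. compact L \<and> (\<forall>g. \<exists>\<gamma>\<in>\<Gamma>. \<exists>l\<in>L. g = \<gamma> + l)"
proof -
  obtain K where K: "compact K" "\<forall>g. \<exists>k\<in>K. \<exists>\<gamma>\<in>\<Gamma>. g = k + \<gamma>"
    using cocompact by blast
  have "\<exists>\<gamma>\<in>\<Gamma>. \<exists>l\<in>uminus ` K. g = \<gamma> + l" for g
  proof -
    obtain k \<gamma> where k: "k \<in> K" "\<gamma> \<in> \<Gamma>" "- g = k + \<gamma>"
      using K(2) by blast
    then have "g = - (k + \<gamma>)"
      by (metis minus_minus)
    then have "g = - \<gamma> + - k"
      by (simp only: minus_add)
    then show ?thesis
      using k(1,2) lattice_minus by blast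
  qed
  moreover have "compact (uminus ` K)"
    by (rule compact_continuous_image[OF continuous_on_subset[OF minus_cont] K(1)]) simp
  ultimately show ?thesis
    by blast
qed

text \<open>Closeness of \<open>g1 + a b\<close> to \<open>c + g2\<close> forces closeness of \<open>- c + g1\<close> to \<open>g2 - a b\<close>, uniformly
  over finitely many \<open>b\<close> (continuity of inversion at the points \<open>a b\<close>).  This is how a model that
  is good for the generators becomes good for their inverses.\<close>
lemma two_sided_closeness:
  fixes a :: "'f \<Rightarrow> 'g"
  assumes B: "finite B" and \<epsilon>: "\<epsilon> > 0"
  obtains \<eta> where "0 < \<eta>" "\<eta> \<le> \<epsilon>"
    "\<And>b g1 c g2. b \<in> B \<Longrightarrow> dist (g1 + a b) (c + g2) < \<eta> \<Longrightarrow> dist (- c + g1) (g2 + - a b) < \<epsilon>"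
proof -
  have "\<forall>b\<in>B. \<exists>d>0. \<forall>u. dist u (a b) < d \<longrightarrow> dist (- u) (- a b) < \<epsilon>"
    using continuous_onD_UNIV[OF minus_cont \<epsilon>] by blast
  then obtain d where d: "d > 0" "\<forall>b\<in>B. \<forall>u. dist u (a b) < d \<longrightarrow> dist (- u) (- a b) < \<epsilon>"
    using finite_pos_min[OF B, of "\<lambda>b d. \<forall>u. dist u (a b) < d \<longrightarrow> dist (- u) (- a b) < \<epsilon>"]
    by fastforce
  have "dist (- c + g1) (g2 + - a b) < \<epsilon>" if b: "b \<in> B" and close: "dist (g1 + a b) (c + g2) < min d \<epsilon>"
    for b g1 c g2
  proof -
    define w where "w = - g1 + (c + g2)"
    have "dist w (a b) = dist (g1 + a b) (c + g2)"
      using dist_left[of g1 w "a b"] by (simp add: w_def dist_commute)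
    then have "dist (- w) (- a b) < \<epsilon>"
      using d(2) b close by simp
    moreover have "- w = - g2 + (- c + g1)"
      unfolding w_def by (simp only: minus_add minus_minus add.assoc)
    moreover have "- a b = - g2 + (g2 + - a b)"
      by (simp only: minus_add_cancel)
    ultimately show ?thesis
      by simp
  qed
  then show ?thesis
    using that[of "min d \<epsilon>"] d(1) \<epsilon> by simp
qed

definition small :: "'f set \<Rightarrow> ('f \<Rightarrow> 'g) \<Rightarrow> real \<Rightarrow> 'g set \<Rightarrow> bool" where
  "small B a \<eta> X \<longleftrightarrow> (\<forall>x\<in>X. \<forall>y\<in>X. dist x y < \<eta> \<and> (\<forall>b\<in>B. dist (x + a b) (y + a b) < \<eta>))"

definition lattice_injective :: "'g set \<Rightarrow> bool" where
  "lattice_injective X \<longleftrightarrow> (\<forall>\<gamma>\<in>\<Gamma>. \<forall>x\<in>X. \<gamma> + x \<in> X \<longrightarrow> \<gamma> = 0)"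

text \<open>Sufficiently small balls are small and \<open>\<Gamma>\<close>-injective (uniform discreteness of \<open>\<Gamma>\<close> and
  continuity of \<open>(x, y) \<mapsto> y - x\<close>).\<close>
lemma small_ball:
  fixes a :: "'f \<Rightarrow> 'g"
  assumes B: "finite B" and \<eta>: "\<eta> > 0"
  shows "\<exists>r>0. r \<le> 1 \<and> small B a \<eta> (ball c r) \<and> lattice_injective (ball c r)"
proof -
  obtain e0 where e0: "e0 > 0" "\<forall>\<gamma>\<in>\<Gamma>. \<forall>\<gamma>'\<in>\<Gamma>. dist \<gamma> \<gamma>' < e0 \<longrightarrow> \<gamma> = \<gamma>'"
    using lattice_uniformly_discrete by blast
  have \<eta>2: "\<eta>/2 > 0"
    using \<eta> by simp
  have "\<forall>b\<in>B. \<exists>d>0. \<forall>x. dist x c < d \<longrightarrow> dist (x + a b) (c + a b) < \<eta>/2"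
    using continuous_onD_UNIV[OF continuous_right_translation \<eta>2] by blast
  then obtain d2 where d2: "d2 > 0" "\<forall>b\<in>B. \<forall>x. dist x c < d2 \<longrightarrow> dist (x + a b) (c + a b) < \<eta>/2"
    using finite_pos_min[OF B, of "\<lambda>b d. \<forall>x. dist x c < d \<longrightarrow> dist (x + a b) (c + a b) < \<eta>/2"]
    by fastforce
  define h where "h p = snd p + - fst p" for p :: "'g \<times> 'g"
  have "continuous_on UNIV h"
    unfolding h_def by (intro continuous_on_add continuous_on_minus continuous_on_fst continuous_on_snd continuous_on_id)
  then obtain d3 where d3: "d3 > 0" "\<forall>p. dist p (c, c) < d3 \<longrightarrow> dist (h p) (h (c, c)) < e0"
    using continuous_onD_UNIV[of h e0 "(c, c)"] e0(1) by blast
  define r where "r = min 1 (min (\<eta>/2) (min d2 (d3/2)))"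
  have r: "r > 0" "r \<le> 1" "r \<le> \<eta>/2" "r \<le> d2" "r \<le> d3/2"
    unfolding r_def using \<eta> d2(1) d3(1) by auto
  have "small B a \<eta> (ball c r)"
    unfolding small_def
  proof (intro ballI conjI)
    fix x y assume "x \<in> ball c r" "y \<in> ball c r"
    then have dx: "dist x c < r" and dy: "dist y c < r"
      by (auto simp: dist_commute)
    show "dist x y < \<eta>"
      using dist_triangle2[of x y c] dx dy r by linarith
    fix b assume "b \<in> B"
    then have "dist (x + a b) (c + a b) < \<eta>/2" "dist (y + a b) (c + a b) < \<eta>/2"
      using d2(2) dx dy r by auto
    then show "dist (x + a b) (y + a b) < \<eta>"
      using dist_triangle2[of "x + a b" "y + a b" "c + a b"] by linarith
  qed
  moreover have "lattice_injective (ball c r)"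
    unfolding lattice_injective_def
  proof (intro ballI impI)
    fix \<gamma> x assume \<gamma>: "\<gamma> \<in> \<Gamma>" and x: "x \<in> ball c r" and \<gamma>x: "\<gamma> + x \<in> ball c r"
    have "dist (x, \<gamma> + x) (c, c) \<le> dist x c + dist (\<gamma> + x) c"
      using sqrt_sum_squares_le_sum_abs[of "dist x c" "dist (\<gamma> + x) c"] by (simp add: dist_Pair_Pair)
    also have "\<dots> < d3"
      using x \<gamma>x r by (simp add: dist_commute)
    finally have "dist (h (x, \<gamma> + x)) (h (c, c)) < e0"
      using d3(2) by blast
    moreover have "h (x, \<gamma> + x) = \<gamma>" "h (c, c) = 0"
      by (simp_all add: h_def add.assoc)
    ultimately have "dist \<gamma> 0 < e0"
      by metis
    then show "\<gamma> = 0"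
      using e0(2) \<gamma> lattice_0 by blast
  qed
  ultimately show ?thesis
    using r by blast
qed

definition lattice_orbit :: "'g set \<Rightarrow> 'g set" where
  "lattice_orbit X = {\<gamma> + x | \<gamma> x. \<gamma> \<in> \<Gamma> \<and> x \<in> X}"

lemma lattice_orbit_UN: "lattice_orbit X = (\<Union>\<gamma>\<in>\<Gamma>. (\<lambda>x. \<gamma> + x) ` X)"
  unfolding lattice_orbit_def by blast

lemma left_translation_image: "(\<lambda>x::'g. g + x) ` X = (\<lambda>x. - g + x) -` X"
proof
  show "(\<lambda>x. g + x) ` X \<subseteq> (\<lambda>x. - g + x) -` X" by auto
  show "(\<lambda>x. - g + x) -` X \<subseteq> (\<lambda>x. g + x) ` X"
  proof
    fix y assume "y \<in> (\<lambda>x. - g + x) -` X"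
    then have "- g + y \<in> X" by simp
    moreover have "y = g + (- g + y)" by simp
    ultimately show "y \<in> (\<lambda>x. g + x) ` X" by blast
  qed
qed

lemma right_translation_image: "(\<lambda>x::'g. x + g) ` X = (\<lambda>x. x + - g) -` X"
proof
  show "(\<lambda>x. x + g) ` X \<subseteq> (\<lambda>x. x + - g) -` X" by auto
  show "(\<lambda>x. x + - g) -` X \<subseteq> (\<lambda>x. x + g) ` X"
  proof
    fix y assume "y \<in> (\<lambda>x. x + - g) -` X"
    then have "y + - g \<in> X" by simp
    moreover have "y = (y + - g) + g" by (simp add: add.assoc)
    ultimately show "y \<in> (\<lambda>x. x + g) ` X" by blast
  qed
qed

lemma open_lattice_orbit: "open X \<Longrightarrow> open (lattice_orbit X)"
  unfolding lattice_orbit_UN left_translation_image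
  by (intro open_UN ballI open_vimage continuous_left_translation)

definition tiling :: "nat \<Rightarrow> (nat \<Rightarrow> 'g set) \<Rightarrow> bool" where
  "tiling m D \<longleftrightarrow> (\<forall>g. \<exists>p<m. \<exists>\<gamma>\<in>\<Gamma>. \<exists>d\<in>D p. g = \<gamma> + d) \<and>
     (\<forall>p p' \<gamma> \<gamma>' d d'. p < m \<longrightarrow> p' < m \<longrightarrow> \<gamma> \<in> \<Gamma> \<longrightarrow> \<gamma>' \<in> \<Gamma> \<longrightarrow> d \<in> D p \<longrightarrow> d' \<in> D p' \<longrightarrow>
        \<gamma> + d = \<gamma>' + d' \<longrightarrow> p = p' \<and> \<gamma> = \<gamma>')"

lemma tilingD:
  assumes "tiling m D"
  shows "\<exists>p<m. \<exists>\<gamma>\<in>\<Gamma>. \<exists>d\<in>D p. g = \<gamma> + d"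
    and "p < m \<Longrightarrow> p' < m \<Longrightarrow> \<gamma> \<in> \<Gamma> \<Longrightarrow> \<gamma>' \<in> \<Gamma> \<Longrightarrow> d \<in> D p \<Longrightarrow> d' \<in> D p' \<Longrightarrow>
      \<gamma> + d = \<gamma>' + d' \<Longrightarrow> p = p' \<and> \<gamma> = \<gamma>' \<and> d = d'"
proof -
  show "\<exists>p<m. \<exists>\<gamma>\<in>\<Gamma>. \<exists>d\<in>D p. g = \<gamma> + d"
    using assms unfolding tiling_def by blast
  assume "p < m" "p' < m" "\<gamma> \<in> \<Gamma>" "\<gamma>' \<in> \<Gamma>" "d \<in> D p" "d' \<in> D p'" and eq: "\<gamma> + d = \<gamma>' + d'"
  then have "p = p' \<and> \<gamma> = \<gamma>'"
    using assms unfolding tiling_def by blast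
  moreover from this have "d = d'"
    using eq by simp
  ultimately show "p = p' \<and> \<gamma> = \<gamma>' \<and> d = d'"
    by blast
qed

lemma lattice_orbit_shift: "\<gamma> \<in> \<Gamma> \<Longrightarrow> x \<in> lattice_orbit X \<Longrightarrow> \<gamma> + x \<in> lattice_orbit X"
  using lattice_add unfolding lattice_orbit_def by (force simp: add.assoc[symmetric])

text \<open>Removing from each set the \<open>\<Gamma>\<close>-translates of the earlier ones keeps a \<open>\<Gamma>\<close>-cover a cover:
  a point lies in a translate of the remainder of the first set whose orbit contains it \<dots>\<close>
lemma disjointified_cover:
  fixes m :: nat and V :: "nat \<Rightarrow> 'g set"
  assumes cover: "\<exists>p<m. g \<in> lattice_orbit (V p)"
  shows "\<exists>p<m. \<exists>\<gamma>\<in>\<Gamma>. \<exists>d\<in>V p - lattice_orbit (\<Union>p'\<in>{..<p}. V p'). g = \<gamma> + d"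
proof -
  define p where "p = (LEAST p. p < m \<and> g \<in> lattice_orbit (V p))"
  have p: "p < m" "g \<in> lattice_orbit (V p)"
    using LeastI_ex[OF cover] unfolding p_def by blast+
  have earlier: "g \<notin> lattice_orbit (V p')" if "p' < p" for p'
    using not_less_Least[OF that[unfolded p_def]] p(1) that unfolding p_def by auto
  obtain \<gamma> v where v: "\<gamma> \<in> \<Gamma>" "v \<in> V p" "g = \<gamma> + v"
    using p(2) unfolding lattice_orbit_def by blast
  have "v \<notin> lattice_orbit (\<Union>p'\<in>{..<p}. V p')"
  proof
    assume "v \<in> lattice_orbit (\<Union>p'\<in>{..<p}. V p')"
    then obtain p' where "p' < p" "v \<in> lattice_orbit (V p')"
      unfolding lattice_orbit_def by blast
    then show False
      using earlier lattice_orbit_shift[OF v(1)] v(3) by blast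
  qed
  then show ?thesis
    using p(1) v by blast
qed

lemma disjointified_disjoint:
  fixes p p' :: nat and V :: "nat \<Rightarrow> 'g set"
  assumes "p < p'" "\<gamma> \<in> \<Gamma>" "\<gamma>' \<in> \<Gamma>" "d \<in> V p" "d' \<in> V p' - lattice_orbit (\<Union>p''\<in>{..<p'}. V p'')"
  shows "\<gamma> + d \<noteq> \<gamma>' + d'"
proof
  assume "\<gamma> + d = \<gamma>' + d'"
  then have "d' = - \<gamma>' + (\<gamma> + d)"
    by simp
  then have "d' = (- \<gamma>' + \<gamma>) + d"
    by (simp add: add.assoc)
  moreover have "d \<in> (\<Union>p''\<in>{..<p'}. V p'')"
    using assms(1,4) by blast
  ultimately have "d' \<in> lattice_orbit (\<Union>p''\<in>{..<p'}. V p'')"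
    using lattice_add[OF lattice_minus[OF assms(3)] assms(2)] unfolding lattice_orbit_def by blast
  then show False
    using assms(5) by blast
qed

lemma disjointified_tiling:
  assumes cover: "\<And>g. \<exists>p<m. g \<in> lattice_orbit (V p)"
    and inj: "\<And>p. p < m \<Longrightarrow> lattice_injective (V p)"
  shows "tiling m (\<lambda>p. V p - lattice_orbit (\<Union>p'\<in>{..<p}. V p'))"
proof -
  define D where "D p = V p - lattice_orbit (\<Union>p'\<in>{..<p}. V p')" for p
  have unique: "p = p' \<and> \<gamma> = \<gamma>'"
    if "p < m" "p' < m" "\<gamma> \<in> \<Gamma>" "\<gamma>' \<in> \<Gamma>" "d \<in> D p" "d' \<in> D p'" "\<gamma> + d = \<gamma>' + d'" for p p' \<gamma> \<gamma>' d d'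
  proof -
    have pp: "p = p'"
    proof (rule ccontr)
      assume "p \<noteq> p'"
      then consider "p < p'" | "p' < p"
        by linarith
      then show False
        using disjointified_disjoint[of p p' \<gamma> \<gamma>' d V d'] disjointified_disjoint[of p' p \<gamma>' \<gamma> d' V d] that
        unfolding D_def by cases auto
    qed
    have "d' = - \<gamma>' + (\<gamma> + d)"
      using that(7) by simp
    then have "(- \<gamma>' + \<gamma>) + d = d'"
      by (simp add: add.assoc)
    moreover have "d \<in> V p" "d' \<in> V p"
      using that(5,6) pp unfolding D_def by blast+
    ultimately have "- \<gamma>' + \<gamma> = 0"
      using inj[OF that(1)] lattice_add[OF lattice_minus[OF that(4)] that(3)]
      unfolding lattice_injective_def by blast
    moreover have "\<gamma> = \<gamma>' + (- \<gamma>' + \<gamma>)"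
      by simp
    ultimately show ?thesis
      using pp by simp
  qed
  have covered: "\<exists>p<m. \<exists>\<gamma>\<in>\<Gamma>. \<exists>d\<in>D p. g = \<gamma> + d" for g
    using disjointified_cover[OF cover] by (simp add: D_def)
  have "tiling m D"
    unfolding tiling_def using covered unique by (intro conjI allI impI) blast+
  moreover have "D = (\<lambda>p. V p - lattice_orbit (\<Union>p'\<in>{..<p}. V p'))"
    by (simp add: fun_eq_iff D_def)
  ultimately show ?thesis
    by simp
qed

lemma small_subset: "small B a \<eta> X \<Longrightarrow> Y \<subseteq> X \<Longrightarrow> small B a \<eta> Y"
  unfolding small_def by blast

text \<open>A tiling by finitely many small bounded Borel pieces, the first of which is an open
  neighbourhood of \<open>0\<close>: cover the compact fundamental set by finitely many small balls, the
  first centred at \<open>0\<close>, and disjointify.\<close>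
lemma small_tiling:
  fixes a :: "'f \<Rightarrow> 'g"
  assumes B: "finite B" and \<eta>: "\<eta> > 0"
  shows "\<exists>m D. 0 < m \<and> tiling m D \<and> 0 \<in> D 0 \<and> open (D 0) \<and>
    (\<forall>p<m. D p \<in> sets borel \<and> bounded (D p) \<and> small B a \<eta> (D p))"
proof -
  obtain L where L: "compact L" "\<forall>g. \<exists>\<gamma>\<in>\<Gamma>. \<exists>l\<in>L. g = \<gamma> + l"
    using compact_fundamental_set by blast
  define good where "good c r \<longleftrightarrow> 0 < r \<and> small B a \<eta> (ball c r) \<and> lattice_injective (ball c r)" for c r
  define R where "R c = (SOME r. good c r)" for c
  have R: "good c (R c)" for c
  proof -
    have "\<exists>r. good c r"
      using small_ball[OF B \<eta>, of a c] by (auto simp: good_def)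
    then show ?thesis
      unfolding R_def by (rule someI_ex)
  qed
  have "L \<subseteq> (\<Union>c\<in>L. ball c (R c))"
    using R unfolding good_def by force
  then obtain C0 where C0: "C0 \<subseteq> L" "finite C0" "L \<subseteq> (\<Union>c\<in>C0. ball c (R c))"
    using compactE_image[OF L(1), of L "\<lambda>c. ball c (R c)"] by blast
  obtain xs where xs: "set xs = C0"
    using finite_list[OF C0(2)] by blast
  define cs where "cs = (0::'g) # xs"
  define m where "m = length cs"
  define V where "V p = ball (cs ! p) (R (cs ! p))" for p
  define D where "D p = V p - lattice_orbit (\<Union>p'\<in>{..<p}. V p')" for p
  have cover: "\<exists>p<m. g \<in> lattice_orbit (V p)" for g
  proof -
    obtain \<gamma> l c where "\<gamma> \<in> \<Gamma>" "g = \<gamma> + l" "c \<in> C0" "l \<in> ball c (R c)"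
      using L(2) C0(3) by blast
    moreover obtain i where "i < length xs" "xs ! i = c"
      using \<open>c \<in> C0\<close> xs by (auto simp: in_set_conv_nth)
    ultimately show ?thesis
      unfolding lattice_orbit_def V_def m_def cs_def
      by (intro exI[of _ "Suc i"]) auto
  qed
  have "tiling m D"
    unfolding D_def using disjointified_tiling[of m V] cover R by (simp add: V_def good_def)
  moreover have "0 < m"
    by (simp add: m_def cs_def)
  moreover have "0 \<in> D 0 \<and> open (D 0)"
    using R[of 0] by (simp add: D_def V_def cs_def lattice_orbit_def good_def)
  moreover have "D p \<in> sets borel \<and> bounded (D p) \<and> small B a \<eta> (D p)" for p
  proof (intro conjI)
    show "D p \<in> sets borel"
      unfolding D_def V_def by (intro sets.Diff borel_open open_lattice_orbit open_UN ballI open_ball)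
    show "bounded (D p)"
      by (rule bounded_subset[OF bounded_ball]) (auto simp: D_def V_def)
    show "small B a \<eta> (D p)"
      by (rule small_subset[of B a \<eta> "V p"]) (use R[of "cs ! p"] in \<open>auto simp: D_def V_def good_def\<close>)
  qed
  ultimately show ?thesis
    by blast
qed

lemma borel_left_translation: "A \<in> sets borel \<Longrightarrow> (\<lambda>x::'g. g + x) ` A \<in> sets borel"
  unfolding left_translation_image
  by (rule measurable_sets_borel[OF borel_measurable_continuous_onI[OF continuous_left_translation]])

lemma borel_right_preimage: "A \<in> sets borel \<Longrightarrow> (\<lambda>x::'g. x + g) -` A \<in> sets borel"
  by (rule measurable_sets_borel[OF borel_measurable_continuous_onI[OF continuous_right_translation]])

lemma borel_right_translation: "A \<in> sets borel \<Longrightarrow> (\<lambda>x::'g. x + g) ` A \<in> sets borel"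
  unfolding right_translation_image by (rule borel_right_preimage)

lemma borel_lattice_orbit: "A \<in> sets borel \<Longrightarrow> lattice_orbit A \<in> sets borel"
  unfolding lattice_orbit_UN by (rule sets.countable_UN''[OF countable_lattice]) (rule borel_left_translation)

definition arrival :: "(nat \<Rightarrow> 'g set) \<Rightarrow> 'g \<Rightarrow> nat \<Rightarrow> 'g set" where
  "arrival D a q = {x. x + a \<in> lattice_orbit (D q)}"

lemma borel_arrival: "D q \<in> sets borel \<Longrightarrow> arrival D a q \<in> sets borel"
proof -
  assume "D q \<in> sets borel"
  moreover have "arrival D a q = (\<lambda>x. x + a) -` lattice_orbit (D q)"
    by (auto simp: arrival_def)
  ultimately show ?thesis
    by (simp add: borel_right_preimage borel_lattice_orbit)
qed

lemma arrival_partition: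
  assumes "tiling m D"
  shows "(\<Union>q<m. arrival D a q) = UNIV"
    and "disjoint_family_on (arrival D a) {..<m}"
proof -
  have "\<exists>q<m. x \<in> arrival D a q" for x
  proof -
    obtain q \<gamma> d where "q < m" "\<gamma> \<in> \<Gamma>" "d \<in> D q" "x + a = \<gamma> + d"
      using tilingD(1)[OF assms] by blast
    then show ?thesis
      unfolding arrival_def lattice_orbit_def by blast
  qed
  then show "(\<Union>q<m. arrival D a q) = UNIV"
    by blast
  show "disjoint_family_on (arrival D a) {..<m}"
    unfolding disjoint_family_on_def
  proof (intro ballI impI equals0I)
    fix q q' x assume q: "q \<in> {..<m}" "q' \<in> {..<m}" "q \<noteq> q'" and "x \<in> arrival D a q \<inter> arrival D a q'"
    then obtain \<gamma> d \<gamma>' d' where "\<gamma> \<in> \<Gamma>" "d \<in> D q" "x + a = \<gamma> + d" "\<gamma>' \<in> \<Gamma>" "d' \<in> D q'" "x + a = \<gamma>' + d'"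
      unfolding arrival_def lattice_orbit_def by blast
    then show False
      using tilingD(2)[OF assms, of q q' \<gamma> \<gamma>' d d'] q by auto
  qed
qed

lemma arrival_decomposition:
  assumes tiling: "tiling m D" and q: "q < m"
    and Dall_def: "Dall = (\<Union>p\<in>{..<m}. D p)"
    and A_def: "A = (\<lambda>\<gamma>. Dall \<inter> (\<lambda>x. x + a) -` ((\<lambda>y. \<gamma> + y) ` D q))"
  shows "Dall \<inter> arrival D a q = (\<Union>\<gamma>\<in>\<Gamma>. A \<gamma>)" "disjoint_family_on A \<Gamma>"
    and "D q = (\<Union>\<gamma>\<in>\<Gamma>. (\<lambda>z. - \<gamma> + z) ` ((\<lambda>x. x + a) ` A \<gamma>))"
    and "disjoint_family_on (\<lambda>\<gamma>. (\<lambda>z. - \<gamma> + z) ` ((\<lambda>x. x + a) ` A \<gamma>)) \<Gamma>"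
proof -
  show A_union: "Dall \<inter> arrival D a q = (\<Union>\<gamma>\<in>\<Gamma>. A \<gamma>)"
    unfolding A_def arrival_def lattice_orbit_def by blast
  show A_disj: "disjoint_family_on A \<Gamma>"
    unfolding disjoint_family_on_def
  proof (intro ballI impI equals0I)
    fix \<gamma> \<gamma>' x assume g: "\<gamma> \<in> \<Gamma>" "\<gamma>' \<in> \<Gamma>" "\<gamma> \<noteq> \<gamma>'" and "x \<in> A \<gamma> \<inter> A \<gamma>'"
    then obtain d d' where "d \<in> D q" "d' \<in> D q" "\<gamma> + d = \<gamma>' + d'"
      unfolding A_def by force
    then show False
      using tilingD(2)[OF tiling q q g(1,2)] g(3) by blast
  qed
  have C_eq: "(\<lambda>z. - \<gamma> + z) ` ((\<lambda>x. x + a) ` A \<gamma>) = {y \<in> D q. \<gamma> + y + - a \<in> Dall}" for \<gamma>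
    unfolding A_def by (rule translate_back_image)
  show C_union: "D q = (\<Union>\<gamma>\<in>\<Gamma>. (\<lambda>z. - \<gamma> + z) ` ((\<lambda>x. x + a) ` A \<gamma>))"
  proof (intro equalityI subsetI)
    fix y assume y: "y \<in> D q"
    obtain p \<gamma>0 d0 where p: "p < m" "\<gamma>0 \<in> \<Gamma>" "d0 \<in> D p" "y + - a = \<gamma>0 + d0"
      using tilingD(1)[OF tiling] by blast
    then have "- \<gamma>0 + y + - a = d0"
      by (simp add: add_diff_eq[symmetric])
    then have "y \<in> {y \<in> D q. - \<gamma>0 + y + - a \<in> Dall}"
      using y p unfolding Dall_def by auto
    then show "y \<in> (\<Union>\<gamma>\<in>\<Gamma>. (\<lambda>z. - \<gamma> + z) ` ((\<lambda>x. x + a) ` A \<gamma>))"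
      using lattice_minus[OF p(2)] unfolding C_eq by blast
  qed (auto simp: C_eq)
  show C_disj: "disjoint_family_on (\<lambda>\<gamma>. (\<lambda>z. - \<gamma> + z) ` ((\<lambda>x. x + a) ` A \<gamma>)) \<Gamma>"
    unfolding disjoint_family_on_def C_eq
  proof (intro ballI impI equals0I)
    fix \<gamma> \<gamma>' y assume g: "\<gamma> \<in> \<Gamma>" "\<gamma>' \<in> \<Gamma>" "\<gamma> \<noteq> \<gamma>'"
      and "y \<in> {y \<in> D q. \<gamma> + y + - a \<in> Dall} \<inter> {y \<in> D q. \<gamma>' + y + - a \<in> Dall}"
    then obtain p p' where pp: "p < m" "p' < m" "\<gamma> + y + - a \<in> D p" "\<gamma>' + y + - a \<in> D p'"
      unfolding Dall_def by blast
    have "(\<gamma>' + - \<gamma>) + (\<gamma> + y + - a) = 0 + (\<gamma>' + y + - a)"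
      by (simp add: add.assoc del: add_uminus_conv_diff)
    then have "\<gamma>' + - \<gamma> = 0"
      using tilingD(2)[OF tiling pp(1,2) _ lattice_0 pp(3,4)] lattice_add[OF g(2) lattice_minus[OF g(1)]]
      by blast
    then show False
      using g(3) by (simp add: add_eq_0_iff2)
  qed
qed

text \<open>An integral plan compatible with the arrival sets of a tiling by small pieces gives a
  finite model: sites of block \<open>p\<close> are placed at a point of \<open>D p\<close> (at \<open>0\<close> for \<open>p = 0\<close>), and
  \<open>\<gamma> b s\<close> is a lattice element witnessing that \<open>D p + \<phi> b\<close> meets \<open>\<gamma> b s + D q\<close>.\<close>
lemma model_from_plan:
  fixes \<phi> :: "'f \<Rightarrow> 'g" and Z :: "'f \<Rightarrow> nat \<Rightarrow> nat \<Rightarrow> nat"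
  assumes tiling: "tiling m D" and small: "\<And>p. p < m \<Longrightarrow> small B \<phi> (\<eta>/2) (D p)"
    and D0: "0 \<in> D 0"
    and row: "\<And>b p. b \<in> B \<Longrightarrow> p < m \<Longrightarrow> (\<Sum>q<m. Z b p q) = n p"
    and col: "\<And>b q. b \<in> B \<Longrightarrow> q < m \<Longrightarrow> (\<Sum>p<m. Z b p q) = n q"
    and arr: "\<And>b p q. b \<in> B \<Longrightarrow> p < m \<Longrightarrow> q < m \<Longrightarrow> 0 < Z b p q \<Longrightarrow> D p \<inter> arrival D (\<phi> b) q \<noteq> {}"
  obtains \<sigma> \<gamma> pos where "pos (0, 0) = 0"
    "\<And>b. b \<in> B \<Longrightarrow> \<sigma> b permutes (SIGMA p:{..<m}. {..<n p})" "\<And>b s. \<gamma> b s \<in> \<Gamma>"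
    "\<And>b s. b \<in> B \<Longrightarrow> s \<in> (SIGMA p:{..<m}. {..<n p}) \<Longrightarrow> dist (pos s + \<phi> b) (\<gamma> b s + pos (\<sigma> b s)) < \<eta>"
proof -
  define S where "S = (SIGMA p:{..<m}. {..<n p})"
  have "\<forall>b\<in>B. \<exists>\<sigma>. \<sigma> permutes S \<and> (\<forall>s\<in>S. 0 < Z b (fst s) (fst (\<sigma> s)))"
  proof
    fix b assume "b \<in> B"
    then obtain \<sigma> where "\<sigma> permutes S" "\<And>s. s \<in> S \<Longrightarrow> 0 < Z b (fst s) (fst (\<sigma> s))"
      unfolding S_def using slot_permutation[of m "Z b" n] row col by blast
    then show "\<exists>\<sigma>. \<sigma> permutes S \<and> (\<forall>s\<in>S. 0 < Z b (fst s) (fst (\<sigma> s)))"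
      by blast
  qed
  then obtain \<sigma> where \<sigma>: "\<And>b. b \<in> B \<Longrightarrow> \<sigma> b permutes S"
    "\<And>b s. b \<in> B \<Longrightarrow> s \<in> S \<Longrightarrow> 0 < Z b (fst s) (fst (\<sigma> b s))"
    by metis
  define rep where "rep p = (if p = 0 then 0 else SOME d. d \<in> D p)" for p
  have rep: "rep p \<in> D p" if "D p \<noteq> {}" for p
    using D0 some_in_eq[of "D p"] that by (auto simp: rep_def)
  define link where "link b s g \<longleftrightarrow> g \<in> \<Gamma> \<and> (\<exists>w\<in>D (fst s). \<exists>d\<in>D (fst (\<sigma> b s)). w + \<phi> b = g + d)" for b s g
  define \<gamma> where "\<gamma> b s = (if \<exists>g. link b s g then SOME g. link b s g else 0)" for b s
  have \<gamma>_link: "link b s (\<gamma> b s)" if "\<exists>g. link b s g" for b s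
    using someI_ex[OF that] that by (simp add: \<gamma>_def)
  have \<gamma>_lattice: "\<gamma> b s \<in> \<Gamma>" for b s
    using \<gamma>_link[of b s] lattice_0 by (cases "\<exists>g. link b s g") (auto simp: \<gamma>_def link_def)
  have "dist (rep (fst s) + \<phi> b) (\<gamma> b s + rep (fst (\<sigma> b s))) < \<eta>" if b: "b \<in> B" and s: "s \<in> S" for b s
  proof -
    define p q where "p = fst s" and "q = fst (\<sigma> b s)"
    have p: "p < m" and q: "q < m"
      using s permutes_in_image[OF \<sigma>(1)[OF b], of s] by (auto simp: S_def p_def q_def)
    obtain w where "w \<in> D p" "w + \<phi> b \<in> lattice_orbit (D q)"
      using arr[OF b p q] \<sigma>(2)[OF b s] by (auto simp: p_def q_def arrival_def)
    then have "\<exists>g. link b s g"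
      unfolding link_def lattice_orbit_def p_def q_def by blast
    then obtain w d where wd: "w \<in> D p" "d \<in> D q" "w + \<phi> b = \<gamma> b s + d"
      using \<gamma>_link[of b s] unfolding link_def p_def q_def by blast
    then have reps: "rep p \<in> D p" "rep q \<in> D q"
      using rep by blast+
    have "dist (rep p + \<phi> b) (\<gamma> b s + rep q) \<le> dist (rep p + \<phi> b) (w + \<phi> b) + dist (\<gamma> b s + d) (\<gamma> b s + rep q)"
      using dist_triangle[of "rep p + \<phi> b" "\<gamma> b s + rep q" "w + \<phi> b"] wd(3) by simp
    also have "\<dots> < \<eta>/2 + \<eta>/2"
      using small[OF p] small[OF q] reps wd(1,2) b unfolding small_def dist_left by (intro add_strict_mono) blast+
    finally show ?thesis
      by (simp add: p_def q_def)
  qed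
  then show ?thesis
    using that[of "\<lambda>s. rep (fst s)" \<sigma> \<gamma>] \<sigma>(1) \<gamma>_lattice by (simp add: S_def rep_def)
qed

end

section \<open>Haar measure and transport\<close>

locale unimodular_lattice = cocompact_lattice \<Gamma> for \<Gamma> :: "'g::{group_add, metric_space} set" +
  fixes M :: "'g measure"
  assumes sets_M: "sets M = sets borel"
    and M_nonzero: "emeasure M UNIV \<noteq> 0"
    and M_compact_finite: "\<And>K. compact K \<Longrightarrow> emeasure M K < \<infinity>"
    and M_left_invariant: "\<And>g A. A \<in> sets borel \<Longrightarrow> emeasure M ((\<lambda>x. g + x) ` A) = emeasure M A"
    and M_right_invariant: "\<And>g A. A \<in> sets borel \<Longrightarrow> emeasure M ((\<lambda>x. x + g) ` A) = emeasure M A"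
begin

text \<open>A nonzero left-invariant measure charges every nonempty open set: otherwise finitely many
  translates would cover the compact fundamental set, and countably many translates of that the group.\<close>
lemma emeasure_open_pos:
  assumes "open U" "u \<in> U"
  shows "emeasure M U > 0"
proof (rule ccontr)
  assume "\<not> emeasure M U > 0"
  then have U0: "emeasure M U = 0"
    by simp
  have null_translate: "(\<lambda>x. g + x) ` A \<in> null_sets M" if "A \<in> sets borel" "emeasure M A = 0" for g A
    using M_left_invariant[OF that(1), of g] that borel_left_translation[OF that(1), of g]
    by (simp add: null_sets_def sets_M)
  obtain L where L: "compact L" "\<forall>g. \<exists>\<gamma>\<in>\<Gamma>. \<exists>l\<in>L. g = \<gamma> + l"
    using compact_fundamental_set by blast
  have cover: "L \<subseteq> (\<Union>l\<in>L. (\<lambda>x. (l - u) + x) ` U)"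
  proof
    fix l assume "l \<in> L"
    moreover have "l = (l - u) + u"
      by simp
    ultimately show "l \<in> (\<Union>l\<in>L. (\<lambda>x. (l - u) + x) ` U)"
      using assms(2) by blast
  qed
  have op: "open ((\<lambda>x. (l - u) + x) ` U)" if "l \<in> L" for l
    unfolding left_translation_image by (rule open_vimage[OF assms(1) continuous_left_translation])
  obtain L0 where L0: "L0 \<subseteq> L" "finite L0" "L \<subseteq> (\<Union>l\<in>L0. (\<lambda>x. (l - u) + x) ` U)"
    by (rule compactE_image[OF L(1) op cover]) blast
  have "(\<Union>l\<in>L0. (\<lambda>x. (l - u) + x) ` U) \<in> null_sets M"
    using null_translate[OF borel_open[OF assms(1)] U0] by (intro null_sets_UN'[OF countable_finite[OF L0(2)]])
  moreover have "L \<in> sets M"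
    using sets_M borel_closed[OF compact_imp_closed[OF L(1)]] by simp
  ultimately have L_null: "emeasure M L = 0"
    using L0(3) null_sets_subset by blast
  have "UNIV = (\<Union>\<gamma>\<in>\<Gamma>. (\<lambda>x. \<gamma> + x) ` L)"
    using L(2) by blast
  moreover have "(\<Union>\<gamma>\<in>\<Gamma>. (\<lambda>x. \<gamma> + x) ` L) \<in> null_sets M"
    using null_translate[OF borel_closed[OF compact_imp_closed[OF L(1)]] L_null]
    by (intro null_sets_UN'[OF countable_lattice])
  ultimately have "UNIV \<in> null_sets M"
    by simp
  then show False
    using M_nonzero null_setsD1 by blast
qed

lemma emeasure_rearrangement:
  assumes A: "\<And>\<gamma>. \<gamma> \<in> \<Gamma> \<Longrightarrow> A \<gamma> \<in> sets borel" and disjA: "disjoint_family_on A \<Gamma>"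
    and disjC: "disjoint_family_on (\<lambda>\<gamma>. (\<lambda>z. - \<gamma> + z) ` ((\<lambda>x. x + a) ` A \<gamma>)) \<Gamma>"
  shows "emeasure M (\<Union>\<gamma>\<in>\<Gamma>. A \<gamma>) = emeasure M (\<Union>\<gamma>\<in>\<Gamma>. (\<lambda>z. - \<gamma> + z) ` ((\<lambda>x. x + a) ` A \<gamma>))"
proof -
  have C: "(\<lambda>z. - \<gamma> + z) ` ((\<lambda>x. x + a) ` A \<gamma>) \<in> sets borel"
    and eq: "emeasure M ((\<lambda>z. - \<gamma> + z) ` ((\<lambda>x. x + a) ` A \<gamma>)) = emeasure M (A \<gamma>)" if "\<gamma> \<in> \<Gamma>" for \<gamma>
    using A[OF that] by (simp_all add: borel_left_translation borel_right_translation
        M_left_invariant M_right_invariant)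
  have "emeasure M (\<Union>\<gamma>\<in>\<Gamma>. A \<gamma>) = (\<integral>\<^sup>+\<gamma>. emeasure M (A \<gamma>) \<partial>count_space \<Gamma>)"
    using A sets_M countable_lattice disjA by (intro emeasure_UN_countable) auto
  also have "\<dots> = (\<integral>\<^sup>+\<gamma>. emeasure M ((\<lambda>z. - \<gamma> + z) ` ((\<lambda>x. x + a) ` A \<gamma>)) \<partial>count_space \<Gamma>)"
    using eq by (intro nn_integral_cong) simp
  also have "\<dots> = emeasure M (\<Union>\<gamma>\<in>\<Gamma>. (\<lambda>z. - \<gamma> + z) ` ((\<lambda>x. x + a) ` A \<gamma>))"
    using C sets_M countable_lattice disjC by (intro emeasure_UN_countable[symmetric]) auto
  finally show ?thesis .
qed

lemma emeasure_row:
  assumes tiling: "tiling m D" and bor: "\<And>q. q < m \<Longrightarrow> D q \<in> sets borel" and A: "A \<in> sets borel"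
  shows "emeasure M A = (\<Sum>q<m. emeasure M (A \<inter> arrival D a q))"
  using A bor arrival_partition[OF tiling, of a]
  by (intro sum_emeasure_cover) (auto simp: sets_M borel_arrival)

text \<open>\<dots> and the total mass arriving in the orbit of \<open>D q\<close> equals the mass of \<open>D q\<close> (column
  sums): cut the arriving points by the lattice element used and translate each part back into
  \<open>D q\<close>; this uses invariance of the measure under both left and right translations.\<close>
lemma emeasure_column:
  assumes tiling: "tiling m D" and bor: "\<And>p. p < m \<Longrightarrow> D p \<in> sets borel" and q: "q < m"
  shows "(\<Sum>p<m. emeasure M (D p \<inter> arrival D a q)) = emeasure M (D q)"
proof -
  define Dall where "Dall = (\<Union>p\<in>{..<m}. D p)"
  have Dall: "Dall \<in> sets borel"
    unfolding Dall_def using bor by auto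
  have "disjoint_family_on (\<lambda>p. D p \<inter> arrival D a q) {..<m}"
    unfolding disjoint_family_on_def
  proof (intro ballI impI equals0I)
    fix p p' x assume "p \<in> {..<m}" "p' \<in> {..<m}" "p \<noteq> p'" "x \<in> D p \<inter> arrival D a q \<inter> (D p' \<inter> arrival D a q)"
    then show False
      using tilingD(2)[OF tiling, of p p' 0 0 x x] lattice_0 by auto
  qed
  then have "(\<Sum>p<m. emeasure M (D p \<inter> arrival D a q)) = emeasure M (\<Union>p\<in>{..<m}. D p \<inter> arrival D a q)"
    using bor borel_arrival[of D q a, OF bor[OF q]] by (intro sum_emeasure) (auto simp: sets_M)
  also have "(\<Union>p\<in>{..<m}. D p \<inter> arrival D a q) = Dall \<inter> arrival D a q"
    unfolding Dall_def by blast
  finally have sum_eq: "(\<Sum>p<m. emeasure M (D p \<inter> arrival D a q)) = emeasure M (Dall \<inter> arrival D a q)" .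
  define A where "A = (\<lambda>\<gamma>. Dall \<inter> (\<lambda>x. x + a) -` ((\<lambda>y. \<gamma> + y) ` D q))"
  have A_borel: "A \<gamma> \<in> sets borel" for \<gamma>
    unfolding A_def using Dall bor[OF q] by (intro sets.Int borel_right_preimage borel_left_translation)
  note decomp = arrival_decomposition[OF tiling q Dall_def A_def]
  show ?thesis
    unfolding sum_eq decomp(1)
    by (subst decomp(3)) (rule emeasure_rearrangement[OF A_borel decomp(2,4)])
qed

section \<open>Existence of finite models\<close>

text \<open>The masses of the sets \<open>D p \<inter> arrival D (\<phi> b) q\<close> form a real transport plan; replace it by
  an integral one with the same support.  Positivity of \<open>D 0\<close> makes block \<open>0\<close> nonempty.\<close>
lemma integral_arrival_plan:
  fixes \<phi> :: "'f \<Rightarrow> 'g"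
  assumes B: "finite B" and tiling: "tiling m D"
    and bor: "\<And>p. p < m \<Longrightarrow> D p \<in> sets borel" and bdd: "\<And>p. p < m \<Longrightarrow> bounded (D p)"
    and m: "0 < m" and D0: "open (D 0)" "0 \<in> D 0"
  shows "\<exists>(n::nat \<Rightarrow> nat) (Z::'f \<Rightarrow> nat \<Rightarrow> nat \<Rightarrow> nat).
    (\<forall>b\<in>B. \<forall>p<m. (\<Sum>q<m. Z b p q) = n p) \<and> (\<forall>b\<in>B. \<forall>q<m. (\<Sum>p<m. Z b p q) = n q) \<and> 0 < n 0 \<and>
    (\<forall>b\<in>B. \<forall>p<m. \<forall>q<m. 0 < Z b p q \<longrightarrow> D p \<inter> arrival D (\<phi> b) q \<noteq> {})"
proof -
  have fin: "emeasure M (D p \<inter> X) < \<infinity>" if p: "p < m" for p X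
  proof -
    obtain c r where "D p \<subseteq> cball c r"
      using bdd[OF p] bounded_subset_cball by blast
    then have "emeasure M (D p \<inter> X) \<le> emeasure M (cball c r)"
      by (intro emeasure_mono) (auto simp: sets_M)
    also have "\<dots> < \<infinity>"
      using M_compact_finite proper by blast
    finally show ?thesis .
  qed
  define W where "W b p q = enn2real (emeasure M (D p \<inter> arrival D (\<phi> b) q))" for b p q
  define \<mu> where "\<mu> p = enn2real (emeasure M (D p))" for p
  have row: "(\<Sum>q<m. W b p q) = \<mu> p" if "p < m" for b p
    using emeasure_row[OF tiling bor bor[OF that], of "\<phi> b"] fin[OF that] fin[OF that, of UNIV]
    by (simp add: W_def \<mu>_def enn2real_sum)
  have col: "(\<Sum>p<m. W b p q) = \<mu> q" if "q < m" for b q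
  proof -
    have "(\<Sum>p<m. W b p q) = enn2real (\<Sum>p<m. emeasure M (D p \<inter> arrival D (\<phi> b) q))"
      using enn2real_sum[of "{..<m}" "\<lambda>p. emeasure M (D p \<inter> arrival D (\<phi> b) q)"] fin
      by (simp add: W_def o_def)
    then show ?thesis
      using emeasure_column[OF tiling bor that, of "\<phi> b"] by (simp add: \<mu>_def)
  qed
  have "\<exists>(n::nat \<Rightarrow> nat) (Z::'f \<Rightarrow> nat \<Rightarrow> nat \<Rightarrow> nat).
      (\<forall>b\<in>B. \<forall>p<m. (\<Sum>q<m. Z b p q) = n p) \<and> (\<forall>b\<in>B. \<forall>q<m. (\<Sum>p<m. Z b p q) = n q) \<and>
      (\<forall>p<m. 0 < n p \<longleftrightarrow> 0 < \<mu> p) \<and> (\<forall>b\<in>B. \<forall>p<m. \<forall>q<m. 0 < Z b p q \<longleftrightarrow> 0 < W b p q)"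
    using row col by (intro integral_transport_plan[OF B]) (simp_all add: W_def \<mu>_def)
  then obtain n :: "nat \<Rightarrow> nat" and Z :: "'f \<Rightarrow> nat \<Rightarrow> nat \<Rightarrow> nat" where
    nZ: "\<forall>b\<in>B. \<forall>p<m. (\<Sum>q<m. Z b p q) = n p" "\<forall>b\<in>B. \<forall>q<m. (\<Sum>p<m. Z b p q) = n q"
      "\<forall>p<m. 0 < n p \<longleftrightarrow> 0 < \<mu> p" "\<forall>b\<in>B. \<forall>p<m. \<forall>q<m. 0 < Z b p q \<longleftrightarrow> 0 < W b p q"
    by blast
  have "0 < \<mu> 0"
    using emeasure_open_pos[OF D0] fin[OF m, of UNIV] by (simp add: \<mu>_def enn2real_positive_iff)
  moreover have "D p \<inter> arrival D (\<phi> b) q \<noteq> {}" if "0 < W b p q" for b p q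
    using that by (auto simp: W_def)
  ultimately show ?thesis
    using nZ m by blast
qed

lemma finite_model_exists:
  fixes \<phi> :: "'f \<Rightarrow> 'g"
  assumes B: "finite B" and \<epsilon>: "\<epsilon> > 0"
  shows "\<exists>(S :: (nat \<times> nat) set) s0 pos \<sigma> \<gamma>. finite_model \<Gamma> \<phi> B \<epsilon> S s0 pos \<sigma> \<gamma>"
proof -
  obtain \<eta> where \<eta>: "0 < \<eta>" "\<eta> \<le> \<epsilon>"
    and two_sided: "\<And>b g1 c g2. b \<in> B \<Longrightarrow> dist (g1 + \<phi> b) (c + g2) < \<eta> \<Longrightarrow> dist (- c + g1) (g2 + - \<phi> b) < \<epsilon>"
  proof (rule two_sided_closeness[OF B \<epsilon>, of \<phi>])
    fix \<eta> assume "0 < \<eta>" "\<eta> \<le> \<epsilon>"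
      "\<And>b g1 c g2. b \<in> B \<Longrightarrow> dist (g1 + \<phi> b) (c + g2) < \<eta> \<Longrightarrow> dist (- c + g1) (g2 + - \<phi> b) < \<epsilon>"
    then show thesis
      by (rule that)
  qed
  have "\<exists>m D. 0 < m \<and> tiling m D \<and> 0 \<in> D 0 \<and> open (D 0) \<and>
      (\<forall>p<m. D p \<in> sets borel \<and> bounded (D p) \<and> small B \<phi> (\<eta>/2) (D p))"
    using \<eta>(1) by (intro small_tiling[OF B]) simp
  then obtain m D where D: "0 < m" "tiling m D" "0 \<in> D 0" "open (D 0)"
    and pieces: "\<forall>p<m. D p \<in> sets borel \<and> bounded (D p) \<and> small B \<phi> (\<eta>/2) (D p)"
    by blast
  have "\<exists>(n::nat \<Rightarrow> nat) (Z::'f \<Rightarrow> nat \<Rightarrow> nat \<Rightarrow> nat).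
      (\<forall>b\<in>B. \<forall>p<m. (\<Sum>q<m. Z b p q) = n p) \<and> (\<forall>b\<in>B. \<forall>q<m. (\<Sum>p<m. Z b p q) = n q) \<and> 0 < n 0 \<and>
      (\<forall>b\<in>B. \<forall>p<m. \<forall>q<m. 0 < Z b p q \<longrightarrow> D p \<inter> arrival D (\<phi> b) q \<noteq> {})"
    using pieces D by (intro integral_arrival_plan[OF B D(2)]) simp_all
  then obtain n :: "nat \<Rightarrow> nat" and Z :: "'f \<Rightarrow> nat \<Rightarrow> nat \<Rightarrow> nat" where
    row: "\<forall>b\<in>B. \<forall>p<m. (\<Sum>q<m. Z b p q) = n p" and col: "\<forall>b\<in>B. \<forall>q<m. (\<Sum>p<m. Z b p q) = n q"
    and n0: "0 < n 0" and arr: "\<forall>b\<in>B. \<forall>p<m. \<forall>q<m. 0 < Z b p q \<longrightarrow> D p \<inter> arrival D (\<phi> b) q \<noteq> {}"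
    by blast
  obtain \<sigma> \<gamma> pos where model: "pos (0, 0) = 0"
      "\<And>b. b \<in> B \<Longrightarrow> \<sigma> b permutes (SIGMA p:{..<m}. {..<n p})" "\<And>b s. \<gamma> b s \<in> \<Gamma>"
      "\<And>b s. b \<in> B \<Longrightarrow> s \<in> (SIGMA p:{..<m}. {..<n p}) \<Longrightarrow> dist (pos s + \<phi> b) (\<gamma> b s + pos (\<sigma> b s)) < \<eta>"
  proof (rule model_from_plan[OF D(2) _ D(3), of B \<phi> \<eta> Z n])
    show "small B \<phi> (\<eta>/2) (D p)" if "p < m" for p
      using pieces that by blast
    show "(\<Sum>q<m. Z b p q) = n p" if "b \<in> B" "p < m" for b p
      using row that by blast
    show "(\<Sum>p<m. Z b p q) = n q" if "b \<in> B" "q < m" for b q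
      using col that by blast
    show "D p \<inter> arrival D (\<phi> b) q \<noteq> {}" if "b \<in> B" "p < m" "q < m" "0 < Z b p q" for b p q
      using arr that by blast
  qed (rule that)
  have "finite_model \<Gamma> \<phi> B \<epsilon> (SIGMA p:{..<m}. {..<n p}) (0, 0) pos \<sigma> \<gamma>"
    unfolding finite_model_def
  proof (intro conjI ballI)
    show "finite (SIGMA p:{..<m}. {..<n p})" "(0, 0) \<in> (SIGMA p:{..<m}. {..<n p})" "pos (0, 0) = 0"
      using D(1) n0 model(1) by auto
    fix b assume b: "b \<in> B"
    show "\<sigma> b permutes (SIGMA p:{..<m}. {..<n p})" "range (\<gamma> b) \<subseteq> \<Gamma>"
      using model(2,3) b by auto
    fix s assume s: "s \<in> (SIGMA p:{..<m}. {..<n p})"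
    show "dist (\<gamma> b s + pos (\<sigma> b s)) (pos s + \<phi> b) \<le> \<epsilon>"
      using model(4)[OF b s] \<eta>(2) by (simp add: dist_commute)
    show "dist (- \<gamma> b s + pos s) (pos (\<sigma> b s) + - \<phi> b) \<le> \<epsilon>"
      using two_sided[OF b model(4)[OF b s]] by simp
  qed
  then show ?thesis
    by blast
qed

end

theorem theorem1:
  fixes \<Gamma> :: "'g::{group_add, metric_space} set"
    and S :: "'f::group_add set"
    and \<phi> :: "'f \<Rightarrow> 'g"
  assumes add_cont: "continuous_on UNIV (\<lambda>p::'g \<times> 'g. fst p + snd p)"
    and minus_cont: "continuous_on UNIV (uminus :: 'g \<Rightarrow> 'g)"
    and loc_compact: "\<forall>x::'g. \<exists>U. open U \<and> x \<in> U \<and> compact (closure U)"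
    and unimod: "unimodular TYPE('g)"
    and left_inv: "\<forall>g x y::'g. dist (g + x) (g + y) = dist x y"
    and proper: "\<forall>(x::'g) r. compact (cball x r)"
    and subgrp: "is_subgroup \<Gamma>"
    and discrete: "\<forall>\<gamma>\<in>\<Gamma>. \<exists>e>0. \<forall>\<gamma>'\<in>\<Gamma>. dist \<gamma> \<gamma>' < e \<longrightarrow> \<gamma>' = \<gamma>"
    and cocompact: "\<exists>K. compact K \<and> (\<forall>g. \<exists>k\<in>K. \<exists>\<gamma>\<in>\<Gamma>. g = k + \<gamma>)"
    and S: "symmetric_free_generating_set S"
    and hom: "is_hom \<phi>"
  shows "\<forall>\<epsilon>>0. \<exists>\<psi>. perturbation \<epsilon> S \<phi> \<psi> \<and> virtually_hom_into \<psi> \<Gamma>"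
proof (intro allI impI)
  fix \<epsilon> :: real assume \<epsilon>: "\<epsilon> > 0"
  obtain B where B: "finite B" "free_basis B" "S = B \<union> uminus ` B"
    using S unfolding symmetric_free_generating_set_def by blast
  obtain M :: "'g measure" where M: "sets M = sets borel" "emeasure M UNIV \<noteq> 0"
      "\<forall>K. compact K \<longrightarrow> emeasure M K < \<infinity>"
      "\<forall>g A. A \<in> sets borel \<longrightarrow>
         emeasure M ((\<lambda>x. g + x) ` A) = emeasure M A \<and> emeasure M ((\<lambda>x. x + g) ` A) = emeasure M A"
    using unimod unfolding unimodular_def by blast
  interpret unimodular_lattice \<Gamma> M
    by unfold_locales (use add_cont minus_cont left_inv proper subgrp discrete cocompact M in auto)
  obtain sites :: "(nat \<times> nat) set" and s0 pos \<sigma> \<gamma>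
    where model: "finite_model \<Gamma> \<phi> B \<epsilon> sites s0 pos \<sigma> \<gamma>"
    using finite_model_exists[OF B(1) \<epsilon>, where \<phi> = \<phi>] by blast
  have "perturbation \<epsilon> (B \<union> uminus ` B) \<phi> (model_map B \<gamma> \<sigma> pos s0)"
    using left_inv by (intro model_map_perturbation[OF subgrp B(2) hom _ model]) blast
  moreover have "virtually_hom_into (model_map B \<gamma> \<sigma> pos s0) \<Gamma>"
    by (rule model_map_virtual_hom[OF subgrp B(2) model])
  ultimately show "\<exists>\<psi>. perturbation \<epsilon> S \<phi> \<psi> \<and> virtually_hom_into \<psi> \<Gamma>"
    using B(3) by blast
qed

end
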